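(* For all finite multisets $\Gamma,\Delta$ of $\mathcal{L}_{A_m}^{\Box}$-formulas: if the sequent $\Gamma\Rightarrow\Delta$ is $\mathsf{K(A)}$-valid, then it is derivable in $\mathsf{GK(A_m)}$.
   Context: $\mathcal{L}_{A_m}^{\Box}$-formulas are built from a countably infinite set $\mathrm{Var}$ of variables using binary $\to$ and unary $\Box$. Fix $p_0\in\mathrm{Var}$; $\overline{0}:=p_0\to p_0$, $\neg\varphi:=\varphi\to\overline{0}$, $\varphi\&\psi:=\neg\varphi\to\psi$. A $\mathsf{K(A)}$-model $\langle W,R,V\rangle$: nonempty $W$, $R\subseteq W\times W$, $V\colon\mathrm{Var}\times W\to[-r,r]$ for some real $r\ge0$, extended by $V(\varphi\to\psi,x)=V(\psi,x)-V(\varphi,x)$, $V(\Box\varphi,x)=\inf_{\mathbb{R}}\{V(\varphi,y):Rxy\}$ (empty infimum $=0$). A formula is $\mathsf{K(A)}$-valid if its value is $\ge0$ at every world of every model. A sequent $\Gamma\Rightarrow\Delta$ (pair of finite multisets of formulas) is $\mathsf{K(A)}$-valid if $\mathcal{I}(\Gamma\Rightarrow\Delta)$ is, where $\mathcal{I}(\varphi_1,\dots,\varphi_n\Rightarrow\psi_1,\dots,\psi_m):=(\varphi_1\&\dots\&\varphi_n)\to(\psi_1\&\dots\&\psi_m)$, empty $\&$-combination $=\overline{0}$. Notation: commas = multiset union, $n\Gamma$ = $\Gamma$ repeated $n$ times, $n[\varphi]$ = $n$ copies of $\varphi$, $\Box\Gamma=[\Box\varphi:\varphi\in\Gamma]$.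 The calculus $\mathsf{GK(A_m)}$ has rules: (id) $\Delta\Rightarrow\Delta$; (cut) from $\Gamma,\varphi\Rightarrow\Delta$ and $\Pi\Rightarrow\varphi,\Sigma$ infer $\Gamma,\Pi\Rightarrow\Sigma,\Delta$; (mix) from $\Gamma\Rightarrow\Delta$ and $\Pi\Rightarrow\Sigma$ infer $\Gamma,\Pi\Rightarrow\Sigma,\Delta$; (sc$_n$) from $n\Gamma\Rightarrow n\Delta$ infer $\Gamma\Rightarrow\Delta$ ($n\ge2$); ($\to\Rightarrow$) from $\Gamma,\psi\Rightarrow\varphi,\Delta$ infer $\Gamma,\varphi\to\psi\Rightarrow\Delta$; ($\Rightarrow\to$) from $\Gamma,\varphi\Rightarrow\psi,\Delta$ infer $\Gamma\Rightarrow\varphi\to\psi,\Delta$; ($\Box_n$) from $\Gamma\Rightarrow n[\varphi]$ infer $\Box\Gamma\Rightarrow n[\Box\varphi]$ ($n\ge0$). A derivation is a finite tree of sequents in which each node with its parents is a rule instance. *)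

theory Defs
  imports Complex_Main "HOL-Library.Multiset"
begin

datatype fm = Var nat | Imp fm fm | Box fm

definition zero_fm :: fm where "zero_fm = Imp (Var 0) (Var 0)"
definition neg_fm :: "fm \<Rightarrow> fm" where "neg_fm \<phi> = Imp \<phi> zero_fm"
definition amp_fm :: "fm \<Rightarrow> fm \<Rightarrow> fm" where "amp_fm \<phi> \<psi> = Imp (neg_fm \<phi>) \<psi>"

fun amp_list :: "fm list \<Rightarrow> fm" where
  "amp_list [] = zero_fm"
| "amp_list [\<phi>] = \<phi>"
| "amp_list (\<phi> # \<psi> # \<chi>s) = amp_fm \<phi> (amp_list (\<psi> # \<chi>s))"

definition is_model :: "nat set \<Rightarrow> (nat \<Rightarrow> nat \<Rightarrow> bool) \<Rightarrow> (nat \<Rightarrow> nat \<Rightarrow> real) \<Rightarrow> bool" where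
  "is_model W R V \<longleftrightarrow> W \<noteq> {} \<and> (\<forall>x y. R x y \<longrightarrow> x \<in> W \<and> y \<in> W)
     \<and> (\<exists>r\<ge>0. \<forall>p. \<forall>x\<in>W. \<bar>V p x\<bar> \<le> r)"

fun eval :: "nat set \<Rightarrow> (nat \<Rightarrow> nat \<Rightarrow> bool) \<Rightarrow> (nat \<Rightarrow> nat \<Rightarrow> real) \<Rightarrow> fm \<Rightarrow> nat \<Rightarrow> real" where
  "eval W R V (Var p) x = V p x"
| "eval W R V (Imp \<phi> \<psi>) x = eval W R V \<psi> x - eval W R V \<phi> x"
| "eval W R V (Box \<phi>) x =
     (if {y \<in> W. R x y} = {} then 0 else (INF y\<in>{y \<in> W. R x y}. eval W R V \<phi> y))"

definition KA_valid :: "fm \<Rightarrow> bool" where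
  "KA_valid \<phi> \<longleftrightarrow> (\<forall>W R V. is_model W R V \<longrightarrow> (\<forall>x\<in>W. eval W R V \<phi> x \<ge> 0))"

definition seq_interp :: "fm multiset \<Rightarrow> fm multiset \<Rightarrow> fm" where
  "seq_interp \<Gamma> \<Delta> = Imp (amp_list (SOME xs. mset xs = \<Gamma>)) (amp_list (SOME ys. mset ys = \<Delta>))"

definition seq_valid :: "fm multiset \<Rightarrow> fm multiset \<Rightarrow> bool" where
  "seq_valid \<Gamma> \<Delta> \<longleftrightarrow> KA_valid (seq_interp \<Gamma> \<Delta>)"

inductive derivable :: "fm multiset \<Rightarrow> fm multiset \<Rightarrow> bool" where
  id: "derivable \<Delta> \<Delta>"
| cut: "derivable (\<Gamma> + {#\<phi>#}) \<Delta> \<Longrightarrow> derivable \<Pi> ({#\<phi>#} + \<Sigma>) \<Longrightarrow> derivable (\<Gamma> + \<Pi>) (\<Sigma> + \<Delta>)"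
| mix: "derivable \<Gamma> \<Delta> \<Longrightarrow> derivable \<Pi> \<Sigma> \<Longrightarrow> derivable (\<Gamma> + \<Pi>) (\<Sigma> + \<Delta>)"
| sc: "n \<ge> 2 \<Longrightarrow> derivable (repeat_mset n \<Gamma>) (repeat_mset n \<Delta>) \<Longrightarrow> derivable \<Gamma> \<Delta>"
| imp_left: "derivable (\<Gamma> + {#\<psi>#}) ({#\<phi>#} + \<Delta>) \<Longrightarrow> derivable (\<Gamma> + {#Imp \<phi> \<psi>#}) \<Delta>"
| imp_right: "derivable (\<Gamma> + {#\<phi>#}) ({#\<psi>#} + \<Delta>) \<Longrightarrow> derivable \<Gamma> ({#Imp \<phi> \<psi>#} + \<Delta>)"
| box: "derivable \<Gamma> (replicate_mset n \<phi>) \<Longrightarrow> derivable (image_mset Box \<Gamma>) (replicate_mset n (Box \<phi>))"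

end

theory Submission
  imports Defs "HOL-Library.Countable"
begin

section \<open>Semantics of sequents as real forms\<close>

lemma eval_zero_fm [simp]: "eval W R V zero_fm x = 0"
  by (simp add: zero_fm_def)

lemma eval_amp_fm: "eval W R V (amp_fm \<phi> \<psi>) x = eval W R V \<phi> x + eval W R V \<psi> x"
  by (simp add: amp_fm_def neg_fm_def)

lemma eval_amp_list: "eval W R V (amp_list \<phi>s) x = (\<Sum>\<phi>\<leftarrow>\<phi>s. eval W R V \<phi> x)"
  by (induction \<phi>s rule: amp_list.induct) (auto simp: eval_amp_fm)

lemma eval_seq_interp:
  "eval W R V (seq_interp \<Gamma> \<Delta>) x =
     (\<Sum>\<phi>\<in>#\<Delta>. eval W R V \<phi> x) - (\<Sum>\<phi>\<in>#\<Gamma>. eval W R V \<phi> x)"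
proof -
  have mset_some: "mset (SOME xs. mset xs = M) = M" for M :: "fm multiset"
    by (rule someI_ex) (rule ex_mset)
  have "(\<Sum>\<phi>\<leftarrow>xs. e \<phi>) = (\<Sum>\<phi>\<in>#mset xs. e \<phi>)" for xs and e :: "fm \<Rightarrow> real"
    by (metis mset_map sum_mset_sum_list)
  then show ?thesis
    unfolding seq_interp_def by (simp add: eval_amp_list mset_some)
qed

lemma is_model_rel: "is_model W R V \<Longrightarrow> R x y \<Longrightarrow> x \<in> W \<and> y \<in> W"
  unfolding is_model_def by blast

lemma eval_Box_nonempty:
  "{y \<in> W. R x y} \<noteq> {} \<Longrightarrow> eval W R V (Box \<phi>) x = (INF y\<in>{y \<in> W. R x y}. eval W R V \<phi> y)"
  unfolding eval.simps(3) by (rule if_not_P)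

lemma eval_Box_no_successor: "{y \<in> W. R x y} = {} \<Longrightarrow> eval W R V (Box \<phi>) x = 0"
  by simp

declare eval.simps(3) [simp del]

lemma eval_bounded:
  assumes "is_model W R V"
  shows "\<exists>B. \<forall>x\<in>W. \<bar>eval W R V \<phi> x\<bar> \<le> B"
proof (induction \<phi>)
  case (Var p)
  show ?case
    using assms unfolding is_model_def eval.simps(1) by blast
next
  case (Imp \<phi> \<psi>)
  then obtain B1 B2 where "\<forall>x\<in>W. \<bar>eval W R V \<phi> x\<bar> \<le> B1" "\<forall>x\<in>W. \<bar>eval W R V \<psi> x\<bar> \<le> B2"
    by blast
  then have "\<forall>x\<in>W. \<bar>eval W R V (Imp \<phi> \<psi>) x\<bar> \<le> B1 + B2"
    by (auto simp: abs_le_iff) (smt (verit))+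
  then show ?case by blast
next
  case (Box \<phi>)
  then obtain B where B: "\<forall>x\<in>W. - B \<le> eval W R V \<phi> x \<and> eval W R V \<phi> x \<le> B"
    by (meson abs_le_D1 abs_le_D2 minus_le_iff)
  have "\<bar>eval W R V (Box \<phi>) x\<bar> \<le> \<bar>B\<bar>" for x
  proof (cases "{y \<in> W. R x y} = {}")
    case False
    then obtain y where y: "y \<in> W" "R x y" by blast
    have "bdd_below ((\<lambda>y. eval W R V \<phi> y) ` {y \<in> W. R x y})"
      using B by (intro bdd_belowI[of _ "- B"]) auto
    then have "(INF y\<in>{y \<in> W. R x y}. eval W R V \<phi> y) \<le> eval W R V \<phi> y"
      by (rule cINF_lower) (use y in simp)
    then have "(INF y\<in>{y \<in> W. R x y}. eval W R V \<phi> y) \<le> B"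
      using y B by fastforce
    moreover have "- B \<le> (INF y\<in>{y \<in> W. R x y}. eval W R V \<phi> y)"
      using False B by (intro cINF_greatest) auto
    ultimately show ?thesis
      using False by (auto simp: abs_le_iff eval_Box_nonempty)
  qed (simp add: eval_Box_no_successor)
  then show ?case by blast
qed

lemma eval_bdd_below:
  assumes "is_model W R V"
  shows "bdd_below ((\<lambda>y. eval W R V \<phi> y) ` {y \<in> W. R x y})"
proof -
  obtain B where "\<forall>x\<in>W. \<bar>eval W R V \<phi> x\<bar> \<le> B"
    using eval_bounded[OF assms] by blast
  then show ?thesis
    by (intro bdd_belowI[of _ "- B"]) (auto simp: abs_le_iff)
qed

text \<open>A form assigns a real weight to each formula; the sequent \<open>\<Gamma> \<Rightarrow> \<Delta>\<close> corresponds to the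
  form with weight \<open>count \<Delta> \<theta> - count \<Gamma> \<theta>\<close>.\<close>

type_synonym form = "fm \<Rightarrow> real"

definition supp :: "form \<Rightarrow> fm set" where
  "supp f = {\<theta>. f \<theta> \<noteq> 0}"

definition form_eval :: "nat set \<Rightarrow> (nat \<Rightarrow> nat \<Rightarrow> bool) \<Rightarrow> (nat \<Rightarrow> nat \<Rightarrow> real) \<Rightarrow> form \<Rightarrow> nat \<Rightarrow> real" where
  "form_eval W R V f x = (\<Sum>\<theta>\<in>supp f. f \<theta> * eval W R V \<theta> x)"

definition form_valid :: "form \<Rightarrow> bool" where
  "form_valid f \<longleftrightarrow> (\<forall>W R V. is_model W R V \<longrightarrow> (\<forall>x\<in>W. form_eval W R V f x \<ge> 0))"

definition seq_form :: "fm multiset \<Rightarrow> fm multiset \<Rightarrow> form" where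
  "seq_form \<Gamma> \<Delta> = (\<lambda>\<theta>. real (count \<Delta> \<theta>) - real (count \<Gamma> \<theta>))"

lemma form_eval_superset:
  assumes "finite X" "supp f \<subseteq> X"
  shows "form_eval W R V f x = (\<Sum>\<theta>\<in>X. f \<theta> * eval W R V \<theta> x)"
  unfolding form_eval_def
  by (rule sum.mono_neutral_left) (use assms in \<open>auto simp: supp_def\<close>)

lemma sum_mset_as_sum_count:
  fixes e :: "'a \<Rightarrow> 'b::comm_semiring_1"
  assumes "finite X" "set_mset M \<subseteq> X"
  shows "(\<Sum>\<theta>\<in>#M. e \<theta>) = (\<Sum>\<theta>\<in>X. of_nat (count M \<theta>) * e \<theta>)"
  using assms
proof (induction M)
  case (add a M)
  then have "(\<Sum>\<theta>\<in>#add_mset a M. e \<theta>) = (\<Sum>\<theta>\<in>X. of_nat (count M \<theta>) * e \<theta>) + (\<Sum>\<theta>\<in>X. if \<theta> = a then e \<theta> else 0)"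
    by (simp add: sum.delta add.commute)
  also have "\<dots> = (\<Sum>\<theta>\<in>X. of_nat (count (add_mset a M) \<theta>) * e \<theta>)"
    by (subst sum.distrib[symmetric]) (rule sum.cong; simp add: algebra_simps)
  finally show ?case .
qed simp

lemma supp_seq_form: "supp (seq_form \<Gamma> \<Delta>) \<subseteq> set_mset \<Gamma> \<union> set_mset \<Delta>"
  unfolding supp_def seq_form_def by (auto simp: not_in_iff)

lemma finite_supp_seq_form: "finite (supp (seq_form \<Gamma> \<Delta>))"
  using supp_seq_form finite_subset by blast

lemma form_valid_seq_form:
  assumes "seq_valid \<Gamma> \<Delta>"
  shows "form_valid (seq_form \<Gamma> \<Delta>)"
  unfolding form_valid_def
proof (intro allI impI ballI)
  fix W R V x
  assume "is_model W R V" "x \<in> W"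
  let ?X = "set_mset \<Gamma> \<union> set_mset \<Delta>"
  let ?e = "\<lambda>\<theta>. eval W R V \<theta> x"
  have "0 \<le> eval W R V (seq_interp \<Gamma> \<Delta>) x"
    using assms \<open>is_model W R V\<close> \<open>x \<in> W\<close> unfolding seq_valid_def KA_valid_def by blast
  also have "\<dots> = (\<Sum>\<theta>\<in>?X. real (count \<Delta> \<theta>) * ?e \<theta>) - (\<Sum>\<theta>\<in>?X. real (count \<Gamma> \<theta>) * ?e \<theta>)"
    unfolding eval_seq_interp by (subst (1 2) sum_mset_as_sum_count[of ?X]) auto
  also have "\<dots> = form_eval W R V (seq_form \<Gamma> \<Delta>) x"
    by (subst form_eval_superset[OF _ supp_seq_form])
      (simp_all add: seq_form_def sum_subtractf[symmetric] algebra_simps)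
  finally show "0 \<le> form_eval W R V (seq_form \<Gamma> \<Delta>) x" .
qed

section \<open>Constructions on pointed models\<close>

record pmodel =
  pworlds :: "nat set"
  prel :: "nat \<Rightarrow> nat \<Rightarrow> bool"
  pval :: "nat \<Rightarrow> nat \<Rightarrow> real"
  proot :: nat

definition pointed_model :: "pmodel \<Rightarrow> bool" where
  "pointed_model t \<longleftrightarrow> is_model (pworlds t) (prel t) (pval t) \<and> proot t \<in> pworlds t"

definition peval :: "fm \<Rightarrow> pmodel \<Rightarrow> real" where
  "peval \<phi> t = eval (pworlds t) (prel t) (pval t) \<phi> (proot t)"

lemma pointed_modelI: "is_model W R V \<Longrightarrow> x \<in> W \<Longrightarrow> pointed_model \<lparr>pworlds = W, prel = R, pval = V, proot = x\<rparr>"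
  by (simp add: pointed_model_def)

definition zero_pmodel :: pmodel where
  "zero_pmodel = \<lparr>pworlds = {0}, prel = \<lambda>_ _. False, pval = \<lambda>_ _. 0, proot = 0\<rparr>"

lemma pointed_model_zero: "pointed_model zero_pmodel"
  by (auto simp: zero_pmodel_def pointed_model_def is_model_def)

lemma peval_zero [simp]: "peval \<phi> zero_pmodel = 0"
proof -
  have "eval {0} (\<lambda>_ _. False) (\<lambda>_ _. 0) \<phi> x = 0" for x
    by (induction \<phi> arbitrary: x) (auto simp: eval_Box_no_successor)
  then show ?thesis
    by (simp add: peval_def zero_pmodel_def)
qed

lemma INF_mult_left:
  fixes f :: "'a \<Rightarrow> real"
  assumes "Y \<noteq> {}" "bdd_below (f ` Y)" "\<alpha> \<ge> 0"
  shows "(INF y\<in>Y. \<alpha> * f y) = \<alpha> * (INF y\<in>Y. f y)"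
proof -
  have "mono ((*) \<alpha>)" "continuous (at_right (Inf (f ` Y))) ((*) \<alpha>)"
    using assms(3) by (auto simp: mono_def mult_left_mono intro: continuous_intros)
  from continuous_at_Inf_mono[OF this] show ?thesis
    using assms(1,2) by (simp add: image_image)
qed

lemma is_model_scale:
  assumes "is_model W R V" "\<alpha> \<ge> 0"
  shows "is_model W R (\<lambda>p y. \<alpha> * V p y)"
proof -
  obtain r where "r \<ge> 0" "\<forall>p. \<forall>x\<in>W. \<bar>V p x\<bar> \<le> r"
    using assms(1) unfolding is_model_def by blast
  then have "\<alpha> * r \<ge> 0" "\<forall>p. \<forall>x\<in>W. \<bar>\<alpha> * V p x\<bar> \<le> \<alpha> * r"
    using assms(2) by (auto simp: abs_mult intro: mult_left_mono)
  then show ?thesis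
    using assms(1) unfolding is_model_def by blast
qed

lemma eval_scale:
  assumes "is_model W R V" "\<alpha> \<ge> 0"
  shows "eval W R (\<lambda>p y. \<alpha> * V p y) \<phi> x = \<alpha> * eval W R V \<phi> x"
proof (induction \<phi> arbitrary: x)
  case (Box \<phi>)
  show ?case
  proof (cases "{y \<in> W. R x y} = {}")
    case False
    then show ?thesis
      using INF_mult_left[OF False eval_bdd_below[OF assms(1)] assms(2)]
      by (simp add: Box.IH eval_Box_nonempty)
  qed (simp add: eval_Box_no_successor)
qed (simp_all add: algebra_simps)

definition scale_pmodel :: "real \<Rightarrow> pmodel \<Rightarrow> pmodel" where
  "scale_pmodel \<alpha> t = t\<lparr>pval := \<lambda>p y. \<alpha> * pval t p y\<rparr>"

lemma pointed_model_scale: "pointed_model t \<Longrightarrow> \<alpha> \<ge> 0 \<Longrightarrow> pointed_model (scale_pmodel \<alpha> t)"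
  and peval_scale: "pointed_model t \<Longrightarrow> \<alpha> \<ge> 0 \<Longrightarrow> peval \<phi> (scale_pmodel \<alpha> t) = \<alpha> * peval \<phi> t"
  by (auto simp: scale_pmodel_def pointed_model_def peval_def is_model_scale eval_scale)

text \<open>A product of two models evaluates formulas to the sum of the two values only if every world
  has a successor, since an empty infimum counts as \<open>0\<close>. Serialisation first adds a fresh world \<open>0\<close>,
  all of whose formulas evaluate to \<open>0\<close>, as the successor of itself and of every dead end.\<close>

definition serial_W :: "nat set \<Rightarrow> nat set" where
  "serial_W W = insert 0 (Suc ` W)"

definition serial_R :: "nat set \<Rightarrow> (nat \<Rightarrow> nat \<Rightarrow> bool) \<Rightarrow> nat \<Rightarrow> nat \<Rightarrow> bool" where
  "serial_R W R a b \<longleftrightarrow> (a = 0 \<and> b = 0) \<or> (a > 0 \<and> b > 0 \<and> R (a - 1) (b - 1))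
      \<or> (a > 0 \<and> a - 1 \<in> W \<and> b = 0 \<and> {y \<in> W. R (a - 1) y} = {})"

definition serial_V :: "(nat \<Rightarrow> nat \<Rightarrow> real) \<Rightarrow> nat \<Rightarrow> nat \<Rightarrow> real" where
  "serial_V V p a = (if a = 0 then 0 else V p (a - 1))"

lemma zero_in_serial_W [simp]: "0 \<in> serial_W W"
  and Suc_in_serial_W [simp]: "Suc a \<in> serial_W W \<longleftrightarrow> a \<in> W"
  by (auto simp: serial_W_def)

lemma is_model_serial:
  assumes "is_model W R V"
  shows "is_model (serial_W W) (serial_R W R) (serial_V V)"
proof -
  obtain r where r: "r \<ge> 0" "\<forall>p. \<forall>x\<in>W. \<bar>V p x\<bar> \<le> r"
    using assms unfolding is_model_def by blast
  have "\<forall>p. \<forall>x\<in>serial_W W. \<bar>serial_V V p x\<bar> \<le> r"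
    using r by (auto simp: serial_W_def serial_V_def)
  moreover have "x \<in> serial_W W \<and> y \<in> serial_W W" if "serial_R W R x y" for x y
    using that is_model_rel[OF assms, of "x - 1" "y - 1"]
    unfolding serial_R_def serial_W_def by (cases x; cases y) auto
  ultimately show ?thesis
    using r unfolding is_model_def by (auto simp: serial_W_def)
qed

lemma serial_successor_exists:
  assumes "a \<in> serial_W W"
  shows "{b \<in> serial_W W. serial_R W R a b} \<noteq> {}"
proof (cases a)
  case 0
  then show ?thesis by (auto simp: serial_R_def)
next
  case (Suc a')
  then have "a' \<in> W"
    using assms by simp
  show ?thesis
  proof (cases "{y \<in> W. R a' y} = {}")
    case True
    then have "0 \<in> {b \<in> serial_W W. serial_R W R a b}"
      using Suc \<open>a' \<in> W\<close> by (simp add: serial_R_def)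
    then show ?thesis by blast
  next
    case False
    then obtain y where "y \<in> W" "R a' y" by blast
    then have "Suc y \<in> {b \<in> serial_W W. serial_R W R a b}"
      using Suc by (simp add: serial_R_def)
    then show ?thesis by blast
  qed
qed

lemma eval_serial:
  assumes "is_model W R V"
  shows "eval (serial_W W) (serial_R W R) (serial_V V) \<phi> 0 = 0 \<and>
    (\<forall>a\<in>W. eval (serial_W W) (serial_R W R) (serial_V V) \<phi> (Suc a) = eval W R V \<phi> a)"
proof (induction \<phi>)
  case (Var p)
  then show ?case by (simp add: serial_V_def)
next
  case (Imp \<phi> \<psi>)
  then show ?case by simp
next
  case (Box \<phi>)
  let ?e = "eval (serial_W W) (serial_R W R) (serial_V V)"
  have "{b \<in> serial_W W. serial_R W R 0 b} = {0}"
    by (auto simp: serial_W_def serial_R_def)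
  then have "?e (Box \<phi>) 0 = 0"
    using Box by (simp add: eval_Box_nonempty)
  moreover have "?e (Box \<phi>) (Suc a) = eval W R V (Box \<phi>) a" if "a \<in> W" for a
  proof (cases "{y \<in> W. R a y} = {}")
    case True
    then have "{b \<in> serial_W W. serial_R W R (Suc a) b} = {0}"
      using that by (auto simp: serial_W_def serial_R_def)
    then show ?thesis
      using Box True by (simp add: eval_Box_nonempty eval_Box_no_successor)
  next
    case False
    have succ: "{b \<in> serial_W W. serial_R W R (Suc a) b} = Suc ` {y \<in> W. R a y}"
      using False is_model_rel[OF assms, of a]
      by (auto simp: serial_W_def serial_R_def image_iff gr0_conv_Suc)
    then have "?e (Box \<phi>) (Suc a) = (INF y\<in>{y \<in> W. R a y}. ?e \<phi> (Suc y))"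
      using False by (simp add: eval_Box_nonempty image_image)
    also have "\<dots> = eval W R V (Box \<phi>) a"
      using Box False by (simp add: eval_Box_nonempty)
    finally show ?thesis .
  qed
  ultimately show ?case by blast
qed

lemma INF_add_Times:
  fixes f g :: "'a \<Rightarrow> real"
  assumes "A \<noteq> {}" "B \<noteq> {}" "bdd_below (f ` A)" "bdd_below (g ` B)"
  shows "(INF p\<in>A \<times> B. f (fst p) + g (snd p)) = (INF a\<in>A. f a) + (INF b\<in>B. g b)"
proof (rule antisym)
  obtain m1 m2 where "\<forall>a\<in>A. m1 \<le> f a" "\<forall>b\<in>B. m2 \<le> g b"
    using assms(3,4) by (auto simp: bdd_below_def)
  then have bdd: "bdd_below ((\<lambda>p. f (fst p) + g (snd p)) ` (A \<times> B))"
    by (intro bdd_belowI[of _ "m1 + m2"]) (auto intro: add_mono)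
  let ?I = "INF p\<in>A \<times> B. f (fst p) + g (snd p)"
  have "?I - f a \<le> (INF b\<in>B. g b)" if "a \<in> A" for a
    using cINF_lower[OF bdd] that by (intro cINF_greatest[OF assms(2)]) force
  then have "?I - (INF b\<in>B. g b) \<le> (INF a\<in>A. f a)"
    by (intro cINF_greatest[OF assms(1)]) (simp add: algebra_simps)
  then show "?I \<le> (INF a\<in>A. f a) + (INF b\<in>B. g b)"
    by simp
  show "(INF a\<in>A. f a) + (INF b\<in>B. g b) \<le> ?I"
    using assms by (intro cINF_greatest) (auto intro!: add_mono cINF_lower)
qed

definition prod_W :: "nat set \<Rightarrow> nat set \<Rightarrow> nat set" where
  "prod_W W1 W2 = prod_encode ` (W1 \<times> W2)"

definition prod_R :: "(nat \<Rightarrow> nat \<Rightarrow> bool) \<Rightarrow> (nat \<Rightarrow> nat \<Rightarrow> bool) \<Rightarrow> nat \<Rightarrow> nat \<Rightarrow> bool" where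
  "prod_R R1 R2 u v \<longleftrightarrow>
     R1 (fst (prod_decode u)) (fst (prod_decode v)) \<and> R2 (snd (prod_decode u)) (snd (prod_decode v))"

definition prod_V :: "(nat \<Rightarrow> nat \<Rightarrow> real) \<Rightarrow> (nat \<Rightarrow> nat \<Rightarrow> real) \<Rightarrow> nat \<Rightarrow> nat \<Rightarrow> real" where
  "prod_V V1 V2 p u = V1 p (fst (prod_decode u)) + V2 p (snd (prod_decode u))"

lemma is_model_prod:
  assumes "is_model W1 R1 V1" "is_model W2 R2 V2"
  shows "is_model (prod_W W1 W2) (prod_R R1 R2) (prod_V V1 V2)"
proof -
  obtain r1 r2 where r: "r1 \<ge> 0" "\<forall>p. \<forall>x\<in>W1. \<bar>V1 p x\<bar> \<le> r1" "r2 \<ge> 0" "\<forall>p. \<forall>x\<in>W2. \<bar>V2 p x\<bar> \<le> r2"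
    using assms unfolding is_model_def by metis
  have "\<forall>p. \<forall>x\<in>prod_W W1 W2. \<bar>prod_V V1 V2 p x\<bar> \<le> r1 + r2"
    using r by (auto simp: prod_W_def prod_V_def intro!: order.trans[OF abs_triangle_ineq] add_mono)
  moreover have "x \<in> prod_W W1 W2 \<and> y \<in> prod_W W1 W2" if "prod_R R1 R2 x y" for x y
    using that is_model_rel[OF assms(1)] is_model_rel[OF assms(2)] unfolding prod_R_def prod_W_def
    by (metis mem_Times_iff prod_decode_inverse rev_image_eqI)
  moreover have "prod_W W1 W2 \<noteq> {}"
    using assms unfolding prod_W_def is_model_def by auto
  ultimately show ?thesis
    using r unfolding is_model_def by (meson add_nonneg_nonneg)
qed

lemma eval_prod:
  assumes "is_model W1 R1 V1" "is_model W2 R2 V2"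
    and "\<And>a. a \<in> W1 \<Longrightarrow> {b \<in> W1. R1 a b} \<noteq> {}"
    and "\<And>a. a \<in> W2 \<Longrightarrow> {b \<in> W2. R2 a b} \<noteq> {}"
    and "a \<in> W1" "b \<in> W2"
  shows "eval (prod_W W1 W2) (prod_R R1 R2) (prod_V V1 V2) \<phi> (prod_encode (a, b))
           = eval W1 R1 V1 \<phi> a + eval W2 R2 V2 \<phi> b"
  using assms(5,6)
proof (induction \<phi> arbitrary: a b)
  case (Var p)
  then show ?case by (simp add: prod_V_def)
next
  case (Imp \<phi> \<psi>)
  then show ?case by simp
next
  case (Box \<phi>)
  let ?A = "{y \<in> W1. R1 a y}" and ?B = "{y \<in> W2. R2 b y}"
  let ?e = "eval (prod_W W1 W2) (prod_R R1 R2) (prod_V V1 V2)"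
  have succ: "{v \<in> prod_W W1 W2. prod_R R1 R2 (prod_encode (a, b)) v} = prod_encode ` (?A \<times> ?B)"
    unfolding prod_W_def prod_R_def by auto
  have "?A \<noteq> {}" "?B \<noteq> {}"
    using assms(3,4) Box.prems by auto
  then have "?e (Box \<phi>) (prod_encode (a, b)) = (INF p\<in>?A \<times> ?B. ?e \<phi> (prod_encode p))"
    by (simp add: succ eval_Box_nonempty image_image)
  also have "\<dots> = (INF p\<in>?A \<times> ?B. eval W1 R1 V1 \<phi> (fst p) + eval W2 R2 V2 \<phi> (snd p))"
    using Box.IH by (intro INF_cong) auto
  also have "\<dots> = eval W1 R1 V1 (Box \<phi>) a + eval W2 R2 V2 (Box \<phi>) b"
    using \<open>?A \<noteq> {}\<close> \<open>?B \<noteq> {}\<close>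
    by (simp add: INF_add_Times eval_bdd_below assms(1,2) eval_Box_nonempty)
  finally show ?case .
qed

definition sum_pmodel :: "pmodel \<Rightarrow> pmodel \<Rightarrow> pmodel" where
  "sum_pmodel t1 t2 =
    \<lparr>pworlds = prod_W (serial_W (pworlds t1)) (serial_W (pworlds t2)),
     prel = prod_R (serial_R (pworlds t1) (prel t1)) (serial_R (pworlds t2) (prel t2)),
     pval = prod_V (serial_V (pval t1)) (serial_V (pval t2)),
     proot = prod_encode (Suc (proot t1), Suc (proot t2))\<rparr>"

lemma pointed_model_sum: "pointed_model t1 \<Longrightarrow> pointed_model t2 \<Longrightarrow> pointed_model (sum_pmodel t1 t2)"
  unfolding pointed_model_def sum_pmodel_def
  by (simp add: is_model_prod is_model_serial) (auto simp: prod_W_def)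

lemma peval_sum:
  assumes "pointed_model t1" "pointed_model t2"
  shows "peval \<phi> (sum_pmodel t1 t2) = peval \<phi> t1 + peval \<phi> t2"
  using assms unfolding pointed_model_def sum_pmodel_def peval_def
  by (simp add: eval_prod[OF is_model_serial is_model_serial serial_successor_exists
        serial_successor_exists] eval_serial)

instance fm :: countable
  by countable_datatype

text \<open>Worlds are natural numbers, so world \<open>w\<close> of the model indexed by \<open>\<psi>\<close> is coded as
  \<open>Suc (prod_encode (to_nat \<psi>, w))\<close>, leaving \<open>0\<close> free for the new root.\<close>

definition join_emb :: "fm \<Rightarrow> nat \<Rightarrow> nat" where
  "join_emb \<psi> w = Suc (prod_encode (to_nat \<psi>, w))"

definition join_W :: "fm set \<Rightarrow> (fm \<Rightarrow> pmodel) \<Rightarrow> nat set" where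
  "join_W S T = insert 0 ((\<lambda>(\<psi>, w). join_emb \<psi> w) ` (SIGMA \<psi>:S. pworlds (T \<psi>)))"

definition join_R :: "fm set \<Rightarrow> (fm \<Rightarrow> pmodel) \<Rightarrow> nat \<Rightarrow> nat \<Rightarrow> bool" where
  "join_R S T u v \<longleftrightarrow> (u = 0 \<and> (\<exists>\<psi>\<in>S. v = join_emb \<psi> (proot (T \<psi>))))
     \<or> (\<exists>\<psi>\<in>S. \<exists>w w'. u = join_emb \<psi> w \<and> v = join_emb \<psi> w' \<and> prel (T \<psi>) w w')"

definition join_V :: "(fm \<Rightarrow> pmodel) \<Rightarrow> nat \<Rightarrow> nat \<Rightarrow> real" where
  "join_V T p u = (if u = 0 then 0
     else pval (T (from_nat (fst (prod_decode (u - 1))))) p (snd (prod_decode (u - 1))))"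

lemma join_emb_eq_iff [simp]: "join_emb \<psi> w = join_emb \<psi>' w' \<longleftrightarrow> \<psi> = \<psi>' \<and> w = w'"
  by (simp add: join_emb_def)

lemma join_emb_nonzero [simp]: "join_emb \<psi> w \<noteq> 0" "0 \<noteq> join_emb \<psi> w"
  by (auto simp: join_emb_def)

lemma join_V_zero [simp]: "join_V T p 0 = 0"
  and join_V_emb [simp]: "join_V T p (join_emb \<psi> w) = pval (T \<psi>) p w"
  by (simp_all add: join_V_def join_emb_def)

lemma join_emb_in_join_W [simp]: "join_emb \<psi> w \<in> join_W S T \<longleftrightarrow> \<psi> \<in> S \<and> w \<in> pworlds (T \<psi>)"
  unfolding join_W_def by auto

lemma is_model_join:
  assumes "finite S" and models: "\<forall>\<psi>\<in>S. pointed_model (T \<psi>)"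
  shows "is_model (join_W S T) (join_R S T) (join_V T)"
proof -
  obtain r where r: "\<forall>\<psi>\<in>S. r \<psi> \<ge> 0 \<and> (\<forall>p. \<forall>x\<in>pworlds (T \<psi>). \<bar>pval (T \<psi>) p x\<bar> \<le> r \<psi>)"
    using models unfolding pointed_model_def is_model_def by metis
  have "\<bar>join_V T p x\<bar> \<le> (\<Sum>\<psi>\<in>S. r \<psi>)" if "x \<in> join_W S T" for p x
  proof -
    have "\<bar>pval (T \<psi>) p w\<bar> \<le> (\<Sum>\<psi>\<in>S. r \<psi>)" if "\<psi> \<in> S" "w \<in> pworlds (T \<psi>)" for \<psi> w
    proof -
      have "\<bar>pval (T \<psi>) p w\<bar> \<le> r \<psi>"
        using r that by blast
      also have "\<dots> \<le> (\<Sum>\<psi>\<in>S. r \<psi>)"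
        using r that \<open>finite S\<close> by (intro member_le_sum) auto
      finally show ?thesis .
    qed
    then show ?thesis
      using \<open>x \<in> join_W S T\<close> r by (auto simp: join_W_def sum_nonneg)
  qed
  moreover have "x \<in> join_W S T \<and> y \<in> join_W S T" if "join_R S T x y" for x y
  proof -
    have "w \<in> pworlds (T \<psi>) \<and> w' \<in> pworlds (T \<psi>)" if "\<psi> \<in> S" "prel (T \<psi>) w w'" for \<psi> w w'
      using models that is_model_rel unfolding pointed_model_def by blast
    then show ?thesis
      using \<open>join_R S T x y\<close> models unfolding join_R_def pointed_model_def
      by (auto simp: join_W_def)
  qed
  moreover have "(\<Sum>\<psi>\<in>S. r \<psi>) \<ge> 0"
    using r by (simp add: sum_nonneg)
  moreover have "join_W S T \<noteq> {}"
    by (simp add: join_W_def)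
  ultimately show ?thesis
    unfolding is_model_def by blast
qed

lemma eval_join_emb:
  assumes "\<psi> \<in> S" "\<forall>\<psi>\<in>S. pointed_model (T \<psi>)" "w \<in> pworlds (T \<psi>)"
  shows "eval (join_W S T) (join_R S T) (join_V T) \<phi> (join_emb \<psi> w)
    = eval (pworlds (T \<psi>)) (prel (T \<psi>)) (pval (T \<psi>)) \<phi> w"
  using assms(3)
proof (induction \<phi> arbitrary: w)
  case (Box \<phi>)
  have "prel (T \<psi>) w w' \<Longrightarrow> w' \<in> pworlds (T \<psi>)" for w'
    using assms is_model_rel unfolding pointed_model_def by blast
  then have succ: "{v \<in> join_W S T. join_R S T (join_emb \<psi> w) v}
      = join_emb \<psi> ` {w' \<in> pworlds (T \<psi>). prel (T \<psi>) w w'}"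
    using assms(1) unfolding join_R_def by auto
  show ?case
  proof (cases "{w' \<in> pworlds (T \<psi>). prel (T \<psi>) w w'} = {}")
    case False
    let ?e = "eval (join_W S T) (join_R S T) (join_V T)"
    have "?e (Box \<phi>) (join_emb \<psi> w) = (INF w'\<in>{w' \<in> pworlds (T \<psi>). prel (T \<psi>) w w'}. ?e \<phi> (join_emb \<psi> w'))"
      using False by (simp add: succ eval_Box_nonempty image_image)
    also have "\<dots> = eval (pworlds (T \<psi>)) (prel (T \<psi>)) (pval (T \<psi>)) (Box \<phi>) w"
      using False Box.IH by (simp add: eval_Box_nonempty)
    finally show ?thesis .
  qed (simp add: succ eval_Box_no_successor)
qed simp_all

lemma eval_join_root_Box:
  assumes "finite S" "S \<noteq> {}" "\<forall>\<psi>\<in>S. pointed_model (T \<psi>)"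
  shows "eval (join_W S T) (join_R S T) (join_V T) (Box \<phi>) 0 = Min ((\<lambda>\<psi>. peval \<phi> (T \<psi>)) ` S)"
proof -
  have succ: "{v \<in> join_W S T. join_R S T 0 v} = (\<lambda>\<psi>. join_emb \<psi> (proot (T \<psi>))) ` S"
    using assms(3) unfolding join_R_def pointed_model_def by auto
  let ?e = "eval (join_W S T) (join_R S T) (join_V T)"
  have "?e (Box \<phi>) 0 = (INF \<psi>\<in>S. ?e \<phi> (join_emb \<psi> (proot (T \<psi>))))"
    using assms(2) by (simp add: succ eval_Box_nonempty image_image)
  also have "\<dots> = (INF \<psi>\<in>S. peval \<phi> (T \<psi>))"
    using eval_join_emb[OF _ assms(3)] assms(3) unfolding peval_def pointed_model_def
    by (intro INF_cong) auto
  also have "\<dots> = Min ((\<lambda>\<psi>. peval \<phi> (T \<psi>)) ` S)"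
    using assms(1,2) by (intro cInf_eq_Min) auto
  finally show ?thesis .
qed

lemma pointed_model_Box_Min:
  fixes T :: "fm \<Rightarrow> pmodel"
  assumes "finite S" "S \<noteq> {}" "\<forall>\<psi>\<in>S. pointed_model (T \<psi>)"
  obtains t where "pointed_model t" "\<And>\<phi>. peval (Box \<phi>) t = Min ((\<lambda>\<psi>. peval \<phi> (T \<psi>)) ` S)"
proof
  let ?t = "\<lparr>pworlds = join_W S T, prel = join_R S T, pval = join_V T, proot = 0\<rparr>"
  show "pointed_model ?t"
    using is_model_join[OF assms(1,3)] by (simp add: pointed_model_def join_W_def)
  show "peval (Box \<phi>) ?t = Min ((\<lambda>\<psi>. peval \<phi> (T \<psi>)) ` S)" for \<phi>
    using eval_join_root_Box[OF assms] by (simp add: peval_def)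
qed

lemma form_valid_pointed_model:
  "form_valid f \<Longrightarrow> pointed_model t \<Longrightarrow> 0 \<le> (\<Sum>\<theta>\<in>supp f. f \<theta> * peval \<theta> t)"
  unfolding form_valid_def pointed_model_def form_eval_def peval_def by blast

lemma form_valid_Var_weight:
  assumes "form_valid f" "finite (supp f)" "\<And>\<phi> \<psi>. f (Imp \<phi> \<psi>) = 0"
  shows "f (Var p) = 0"
proof -
  have "0 \<le> f (Var p) * s" if "\<bar>s\<bar> \<le> 1" for s
  proof -
    let ?V = "\<lambda>q (x::nat). if q = p then s else 0"
    have eval_V: "eval {0} (\<lambda>_ _. False) ?V \<theta> 0 = (if \<theta> = Var p then s else 0)"
      if "\<theta> \<in> supp f" for \<theta>
      using that assms(3) by (cases \<theta>) (auto simp: supp_def eval_Box_no_successor)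
    have "is_model {0} (\<lambda>_ _. False) ?V"
      unfolding is_model_def using that by (auto intro!: exI[of _ 1])
    then have "0 \<le> form_eval {0} (\<lambda>_ _. False) ?V f 0"
      using assms(1) unfolding form_valid_def by blast
    also have "\<dots> = (\<Sum>\<theta>\<in>supp f. if \<theta> = Var p then f \<theta> * s else 0)"
      unfolding form_eval_def by (intro sum.cong refl) (simp add: eval_V)
    also have "\<dots> = f (Var p) * s"
      using assms(2) by (simp add: sum.delta supp_def)
    finally show ?thesis .
  qed
  from this[of 1] this[of "-1"] show ?thesis by simp
qed

section \<open>The box step: weights from a finite Hahn--Banach argument\<close>

lemma real_between_bounds:
  fixes L U :: "'a \<Rightarrow> real"
  assumes "Y \<noteq> {}" "\<And>y z. y \<in> Y \<Longrightarrow> z \<in> Y \<Longrightarrow> L y \<le> U z"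
  obtains b where "\<And>y. y \<in> Y \<Longrightarrow> L y \<le> b" "\<And>z. z \<in> Y \<Longrightarrow> b \<le> U z"
proof
  obtain z0 where "z0 \<in> Y" using assms(1) by blast
  then have bdd: "bdd_above (L ` Y)"
    using assms(2) by (intro bdd_aboveI[of _ "U z0"]) auto
  show "L y \<le> (SUP y\<in>Y. L y)" if "y \<in> Y" for y
    using bdd that by (rule cSUP_upper2) simp
  show "(SUP y\<in>Y. L y) \<le> U z" if "z \<in> Y" for z
    using assms that by (intro cSUP_least) auto
qed

lemma Hahn_Banach_extension_step:
  fixes \<rho> :: "('i \<Rightarrow> real) \<Rightarrow> real"
  assumes sub: "\<And>x y. \<rho> (\<lambda>i. x i + y i) \<le> \<rho> x + \<rho> y"
    and hom: "\<And>\<alpha> x. \<alpha> > 0 \<Longrightarrow> \<rho> (\<lambda>i. \<alpha> * x i) \<le> \<alpha> * \<rho> x"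
    and "finite I" "k \<notin> I"
    and dom: "\<And>x. (\<forall>i. i \<notin> I \<longrightarrow> x i = 0) \<Longrightarrow> (\<Sum>i\<in>I. a i * x i) \<le> \<rho> x"
  obtains b where
    "\<And>x. (\<forall>i. i \<notin> insert k I \<longrightarrow> x i = 0) \<Longrightarrow> (\<Sum>i\<in>insert k I. (a(k := b)) i * x i) \<le> \<rho> x"
proof -
  define l where "l x = (\<Sum>i\<in>I. a i * x i)" for x :: "'i \<Rightarrow> real"
  define e where "e = (\<lambda>i. if i = k then (1::real) else 0)"
  define Y where "Y = {y :: 'i \<Rightarrow> real. \<forall>i. i \<notin> I \<longrightarrow> y i = 0}"
  have l_add: "l (\<lambda>i. y i + z i) = l y + l z" and l_div: "l (\<lambda>i. y i / t) = l y / t" for y z t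
    by (simp_all add: l_def sum.distrib algebra_simps sum_divide_distrib)
  have Y_div: "(\<lambda>i. y i / t) \<in> Y" if "y \<in> Y" for y t
    using that by (simp add: Y_def)
  have bracket: "l y - \<rho> (\<lambda>i. y i - e i) \<le> \<rho> (\<lambda>i. z i + e i) - l z" if "y \<in> Y" "z \<in> Y" for y z
  proof -
    have "l y + l z = l (\<lambda>i. y i + z i)"
      by (simp add: l_add)
    also have "\<dots> \<le> \<rho> (\<lambda>i. y i + z i)"
      using dom that unfolding l_def Y_def by simp
    also have "\<dots> \<le> \<rho> (\<lambda>i. y i - e i) + \<rho> (\<lambda>i. z i + e i)"
      using sub[of "\<lambda>i. y i - e i" "\<lambda>i. z i + e i"] by simp
    finally show ?thesis by simp
  qed
  moreover have "(\<lambda>i. 0) \<in> Y"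
    by (simp add: Y_def)
  ultimately obtain b where below: "\<And>y. y \<in> Y \<Longrightarrow> l y - \<rho> (\<lambda>i. y i - e i) \<le> b"
    and above: "\<And>z. z \<in> Y \<Longrightarrow> b \<le> \<rho> (\<lambda>i. z i + e i) - l z"
    using real_between_bounds[of Y "\<lambda>y. l y - \<rho> (\<lambda>i. y i - e i)" "\<lambda>z. \<rho> (\<lambda>i. z i + e i) - l z"]
    by blast
  show ?thesis
  proof (rule that[of b])
    fix x :: "'i \<Rightarrow> real"
    assume x: "\<forall>i. i \<notin> insert k I \<longrightarrow> x i = 0"
    define y where "y = x(k := 0)"
    define t where "t = x k"
    have "y \<in> Y" using x by (auto simp: Y_def y_def)
    have x_eq: "x = (\<lambda>i. y i + t * e i)"
      by (auto simp: y_def t_def e_def)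
    have "(\<Sum>i\<in>insert k I. (a(k := b)) i * x i) = t * b + l y"
      using \<open>finite I\<close> \<open>k \<notin> I\<close> by (auto simp: l_def y_def t_def intro!: sum.cong)
    moreover have "t * b + l y \<le> \<rho> x"
    proof (cases t "0::real" rule: linorder_cases)
      case less
      define s where "s = - t"
      have "s > 0"
        using less by (simp add: s_def)
      have "l y / s - \<rho> (\<lambda>i. y i / s - e i) \<le> b"
        using below[OF Y_div[OF \<open>y \<in> Y\<close>, of s]] by (simp add: l_div)
      moreover have "(\<lambda>i. y i / s - e i) = (\<lambda>i. (1 / s) * x i)"
        using \<open>s > 0\<close> by (auto simp: x_eq s_def field_simps)
      ultimately have "l y / s - (1 / s) * \<rho> x \<le> b"
        using hom[of "1 / s" x] \<open>s > 0\<close> by simp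
      then show ?thesis
        using \<open>s > 0\<close> by (simp add: s_def field_simps)
    next
      case equal
      then show ?thesis
        using dom \<open>y \<in> Y\<close> x_eq by (simp add: l_def Y_def)
    next
      case greater
      have "b \<le> \<rho> (\<lambda>i. y i / t + e i) - l y / t"
        using above[OF Y_div[OF \<open>y \<in> Y\<close>]] by (simp add: l_div)
      moreover have "(\<lambda>i. y i / t + e i) = (\<lambda>i. (1 / t) * x i)"
        using greater by (auto simp: x_eq field_simps)
      ultimately have "b \<le> (1 / t) * \<rho> x - l y / t"
        using hom[of "1 / t" x] greater by simp
      then show ?thesis
        using greater by (simp add: field_simps)
    qed
    ultimately show "(\<Sum>i\<in>insert k I. (a(k := b)) i * x i) \<le> \<rho> x"
      by simp
  qed
qed

lemma Hahn_Banach_finite: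
  fixes \<rho> :: "('i \<Rightarrow> real) \<Rightarrow> real"
  assumes "finite I"
    and "\<And>x y. \<rho> (\<lambda>i. x i + y i) \<le> \<rho> x + \<rho> y"
    and "\<And>\<alpha> x. \<alpha> > 0 \<Longrightarrow> \<rho> (\<lambda>i. \<alpha> * x i) \<le> \<alpha> * \<rho> x"
  obtains a where "\<And>x. (\<forall>i. i \<notin> I \<longrightarrow> x i = 0) \<Longrightarrow> (\<Sum>i\<in>I. a i * x i) \<le> \<rho> x"
proof -
  have "\<exists>a. \<forall>x. (\<forall>i. i \<notin> I \<longrightarrow> x i = 0) \<longrightarrow> (\<Sum>i\<in>I. a i * x i) \<le> \<rho> x"
    using \<open>finite I\<close>
  proof (induction I rule: finite_induct)
    case empty
    have "0 \<le> \<rho> (\<lambda>i. 0)"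
      using assms(3)[of 2 "\<lambda>i. 0"] by simp
    then show ?case
      by (auto simp: fun_eq_iff[symmetric])
  next
    case (insert k I)
    then obtain a where "\<And>x. (\<forall>i. i \<notin> I \<longrightarrow> x i = 0) \<Longrightarrow> (\<Sum>i\<in>I. a i * x i) \<le> \<rho> x"
      by blast
    from Hahn_Banach_extension_step[where \<rho> = \<rho>, OF assms(2,3) insert(1,2) this] show ?case
      by blast
  qed
  then show ?thesis
    using that by blast
qed

text \<open>\<open>D\<close> and \<open>S\<close> are the bodies of the boxes with negative weight \<open>-d\<close> and positive weight \<open>c\<close> in a
  valid form, and \<open>Min_bound\<close> is its validity at the root of the join of a family \<open>T\<close>. The
  functional \<open>rho\<close> is sublinear because families can be added and scaled pointwise; a linear
  functional below it yields the weights \<open>\<mu>\<close> distributing each \<open>d \<phi>\<close> over \<open>S\<close>.\<close>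

locale box_split =
  fixes S D :: "fm set" and c d :: "fm \<Rightarrow> real"
  assumes finite_S: "finite S" and S_nonempty: "S \<noteq> {}" and finite_D: "finite D"
    and d_nonneg: "\<And>\<phi>. 0 \<le> d \<phi>"
    and Min_bound: "\<And>T. \<forall>\<psi>\<in>S. pointed_model (T \<psi>) \<Longrightarrow>
      (\<Sum>\<phi>\<in>D. d \<phi> * Min ((\<lambda>\<psi>. peval \<phi> (T \<psi>)) ` S)) \<le> (\<Sum>\<psi>\<in>S. c \<psi> * peval \<psi> (T \<psi>))"
begin

definition max_part :: "(fm \<times> fm \<Rightarrow> real) \<Rightarrow> real" where
  "max_part x = (\<Sum>\<phi>\<in>D. d \<phi> * Max ((\<lambda>\<psi>. x (\<phi>, \<psi>)) ` S))"

lemma max_part_cong: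
  "(\<And>\<phi> \<psi>. \<phi> \<in> D \<Longrightarrow> \<psi> \<in> S \<Longrightarrow> x (\<phi>, \<psi>) = y (\<phi>, \<psi>)) \<Longrightarrow> max_part x = max_part y"
  unfolding max_part_def by (intro sum.cong refl arg_cong2[where f = "(*)"] arg_cong[where f = Max]) auto

lemma max_part_add: "max_part (\<lambda>i. x i + y i) \<le> max_part x + max_part y"
proof -
  have "Max ((\<lambda>\<psi>. x (\<phi>, \<psi>) + y (\<phi>, \<psi>)) ` S) \<le> Max ((\<lambda>\<psi>. x (\<phi>, \<psi>)) ` S) + Max ((\<lambda>\<psi>. y (\<phi>, \<psi>)) ` S)"
    for \<phi>
    using finite_S S_nonempty by (subst Max_le_iff) (auto intro!: add_mono Max_ge)
  then show ?thesis
    unfolding max_part_def sum.distrib[symmetric] distrib_left[symmetric]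
    by (intro sum_mono mult_left_mono d_nonneg)
qed

lemma max_part_scale:
  assumes "0 \<le> \<alpha>"
  shows "max_part (\<lambda>i. \<alpha> * x i) = \<alpha> * max_part x"
proof -
  have "Max ((\<lambda>\<psi>. \<alpha> * x (\<phi>, \<psi>)) ` S) = \<alpha> * Max ((\<lambda>\<psi>. x (\<phi>, \<psi>)) ` S)" for \<phi>
    using finite_S S_nonempty assms mono_Max_commute[of "(*) \<alpha>" "(\<lambda>\<psi>. x (\<phi>, \<psi>)) ` S"]
    by (simp add: mono_def mult_left_mono image_image)
  then show ?thesis
    unfolding max_part_def sum_distrib_left by (simp add: mult.left_commute)
qed

lemma max_part_uminus: "max_part (\<lambda>i. - x i) = - (\<Sum>\<phi>\<in>D. d \<phi> * Min ((\<lambda>\<psi>. x (\<phi>, \<psi>)) ` S))"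
proof -
  have "Max ((\<lambda>\<psi>. - x (\<phi>, \<psi>)) ` S) = - Min ((\<lambda>\<psi>. x (\<phi>, \<psi>)) ` S)" for \<phi>
    using finite_S S_nonempty by (simp add: image_image)
  then show ?thesis
    unfolding max_part_def sum_negf[symmetric] by simp
qed

lemma max_part_zero: "max_part (\<lambda>i. 0) = 0"
  using max_part_scale[of 0 "\<lambda>i. 0"] by simp

lemma linear_below_max_part:
  assumes "\<And>x. (\<forall>i. i \<notin> D \<times> S \<longrightarrow> x i = 0) \<Longrightarrow> (\<Sum>i\<in>D \<times> S. a i * x i) \<le> max_part x"
  shows "\<And>\<phi> \<psi>. \<phi> \<in> D \<Longrightarrow> \<psi> \<in> S \<Longrightarrow> 0 \<le> a (\<phi>, \<psi>)"
    and "\<And>\<phi>. \<phi> \<in> D \<Longrightarrow> (\<Sum>\<psi>\<in>S. a (\<phi>, \<psi>)) = d \<phi>"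
proof -
  fix \<phi>0 \<psi>0
  assume "\<phi>0 \<in> D" "\<psi>0 \<in> S"
  let ?x = "\<lambda>i. if i = (\<phi>0, \<psi>0) then -1 else (0::real)"
  have "\<forall>i. i \<notin> D \<times> S \<longrightarrow> ?x i = 0"
    using \<open>\<phi>0 \<in> D\<close> \<open>\<psi>0 \<in> S\<close> by auto
  then have "(\<Sum>i\<in>D \<times> S. a i * ?x i) \<le> max_part ?x"
    by (rule assms)
  moreover have "(\<Sum>i\<in>D \<times> S. a i * ?x i) = - a (\<phi>0, \<psi>0)"
    using \<open>\<phi>0 \<in> D\<close> \<open>\<psi>0 \<in> S\<close> finite_D finite_S by (simp add: if_distrib sum.delta cong: if_cong)
  moreover have "Max ((\<lambda>\<psi>. ?x (\<phi>, \<psi>)) ` S) \<le> 0" for \<phi>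
    using finite_S S_nonempty by (subst Max_le_iff) auto
  then have "max_part ?x \<le> 0"
    unfolding max_part_def by (intro sum_nonpos mult_nonneg_nonpos d_nonneg)
  ultimately show "0 \<le> a (\<phi>0, \<psi>0)"
    by linarith
next
  fix \<phi>0
  assume "\<phi>0 \<in> D"
  have "s * (\<Sum>\<psi>\<in>S. a (\<phi>0, \<psi>)) \<le> s * d \<phi>0" for s
  proof -
    let ?x = "\<lambda>i. if fst i = \<phi>0 \<and> snd i \<in> S then s else (0::real)"
    have "\<forall>i. i \<notin> D \<times> S \<longrightarrow> ?x i = 0"
      using \<open>\<phi>0 \<in> D\<close> by auto
    then have "(\<Sum>i\<in>D \<times> S. a i * ?x i) \<le> max_part ?x"
      by (rule assms)
    moreover have "(\<Sum>i\<in>D \<times> S. a i * ?x i) = (\<Sum>\<phi>\<in>D. \<Sum>\<psi>\<in>S. if \<phi> = \<phi>0 then s * a (\<phi>, \<psi>) else 0)"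
      by (simp add: sum.cartesian_product split_def) (rule sum.cong; auto)
    moreover have "\<dots> = (\<Sum>\<phi>\<in>D. if \<phi> = \<phi>0 then s * (\<Sum>\<psi>\<in>S. a (\<phi>, \<psi>)) else 0)"
      by (intro sum.cong refl) (simp add: sum_distrib_left)
    moreover have "\<dots> = s * (\<Sum>\<psi>\<in>S. a (\<phi>0, \<psi>))"
      using finite_D \<open>\<phi>0 \<in> D\<close> by simp
    moreover have "max_part ?x = (\<Sum>\<phi>\<in>D. if \<phi> = \<phi>0 then d \<phi> * s else 0)"
      unfolding max_part_def using S_nonempty by (intro sum.cong refl) (auto simp: image_constant_conv)
    moreover have "\<dots> = s * d \<phi>0"
      using finite_D \<open>\<phi>0 \<in> D\<close> by simp
    ultimately show ?thesis
      by simp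
  qed
  from this[of 1] this[of "-1"] show "(\<Sum>\<psi>\<in>S. a (\<phi>0, \<psi>)) = d \<phi>0"
    by simp
qed

definition families :: "(fm \<Rightarrow> pmodel) set" where
  "families = {T. \<forall>\<psi>\<in>S. pointed_model (T \<psi>)}"

definition peval_matrix :: "(fm \<Rightarrow> pmodel) \<Rightarrow> fm \<times> fm \<Rightarrow> real" where
  "peval_matrix T = (\<lambda>(\<phi>, \<psi>). peval \<phi> (T \<psi>))"

definition gain :: "(fm \<Rightarrow> pmodel) \<Rightarrow> real" where
  "gain T = (\<Sum>\<psi>\<in>S. c \<psi> * peval \<psi> (T \<psi>))"

definition excess :: "(fm \<times> fm \<Rightarrow> real) \<Rightarrow> (fm \<Rightarrow> pmodel) \<Rightarrow> real" where
  "excess x T = max_part (\<lambda>i. x i - peval_matrix T i) + gain T"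

definition rho :: "(fm \<times> fm \<Rightarrow> real) \<Rightarrow> real" where
  "rho x = (INF T\<in>families. excess x T)"

lemma zero_family: "(\<lambda>_. zero_pmodel) \<in> families"
  by (simp add: families_def pointed_model_zero)

lemma excess_lower_bound:
  assumes "T \<in> families"
  shows "- max_part (\<lambda>i. - x i) \<le> excess x T"
proof -
  have "max_part (\<lambda>i. - peval_matrix T i) \<le> max_part (\<lambda>i. x i - peval_matrix T i) + max_part (\<lambda>i. - x i)"
    using max_part_add[of "\<lambda>i. x i - peval_matrix T i" "\<lambda>i. - x i"] by simp
  moreover have "- max_part (\<lambda>i. - peval_matrix T i) \<le> gain T"
    using Min_bound assms by (simp add: max_part_uminus peval_matrix_def gain_def families_def)
  ultimately show ?thesis
    unfolding excess_def by linarith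
qed

lemma rho_cong: "(\<And>\<phi> \<psi>. \<phi> \<in> D \<Longrightarrow> \<psi> \<in> S \<Longrightarrow> x (\<phi>, \<psi>) = y (\<phi>, \<psi>)) \<Longrightarrow> rho x = rho y"
  unfolding rho_def excess_def by (simp add: max_part_cong[of "\<lambda>i. x i - _ i" "\<lambda>i. y i - _ i"])

lemma rho_le_excess: "T \<in> families \<Longrightarrow> rho x \<le> excess x T"
  unfolding rho_def using excess_lower_bound
  by (intro cINF_lower bdd_belowI[of _ "- max_part (\<lambda>i. - x i)"]) auto

lemma rho_greatest: "(\<And>T. T \<in> families \<Longrightarrow> b \<le> excess x T) \<Longrightarrow> b \<le> rho x"
  unfolding rho_def using zero_family by (intro cINF_greatest) auto

lemma rho_le_max_part: "rho x \<le> max_part x"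
  using rho_le_excess[OF zero_family, of x]
  by (simp add: excess_def peval_matrix_def gain_def case_prod_beta)

lemma excess_sum:
  assumes "T1 \<in> families" "T2 \<in> families"
  shows "excess (\<lambda>i. x i + y i) (\<lambda>\<psi>. sum_pmodel (T1 \<psi>) (T2 \<psi>)) \<le> excess x T1 + excess y T2"
proof -
  let ?T = "\<lambda>\<psi>. sum_pmodel (T1 \<psi>) (T2 \<psi>)"
  have "max_part (\<lambda>i. x i + y i - peval_matrix ?T i)
      = max_part (\<lambda>i. (x i - peval_matrix T1 i) + (y i - peval_matrix T2 i))"
    using assms by (intro max_part_cong) (simp add: peval_matrix_def families_def peval_sum)
  also have "\<dots> \<le> max_part (\<lambda>i. x i - peval_matrix T1 i) + max_part (\<lambda>i. y i - peval_matrix T2 i)"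
    by (rule max_part_add)
  moreover have "gain ?T = gain T1 + gain T2"
    using assms unfolding gain_def sum.distrib[symmetric]
    by (intro sum.cong refl) (simp add: families_def peval_sum algebra_simps)
  ultimately show ?thesis
    unfolding excess_def by linarith
qed

lemma rho_add: "rho (\<lambda>i. x i + y i) \<le> rho x + rho y"
proof -
  have "rho (\<lambda>i. x i + y i) - excess y T2 \<le> rho x" if "T2 \<in> families" for T2
  proof (rule rho_greatest)
    fix T1
    assume "T1 \<in> families"
    then have "(\<lambda>\<psi>. sum_pmodel (T1 \<psi>) (T2 \<psi>)) \<in> families"
      using that by (simp add: families_def pointed_model_sum)
    then have "rho (\<lambda>i. x i + y i) \<le> excess (\<lambda>i. x i + y i) (\<lambda>\<psi>. sum_pmodel (T1 \<psi>) (T2 \<psi>))"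
      by (rule rho_le_excess)
    then show "rho (\<lambda>i. x i + y i) - excess y T2 \<le> excess x T1"
      using excess_sum[OF \<open>T1 \<in> families\<close> that, of x y] by linarith
  qed
  then have "rho (\<lambda>i. x i + y i) - rho x \<le> rho y"
    by (intro rho_greatest) (simp add: algebra_simps)
  then show ?thesis
    by simp
qed

lemma excess_scale:
  assumes "T \<in> families" "0 \<le> \<alpha>"
  shows "excess (\<lambda>i. \<alpha> * x i) (\<lambda>\<psi>. scale_pmodel \<alpha> (T \<psi>)) = \<alpha> * excess x T"
proof -
  have "max_part (\<lambda>i. \<alpha> * x i - peval_matrix (\<lambda>\<psi>. scale_pmodel \<alpha> (T \<psi>)) i)
      = max_part (\<lambda>i. \<alpha> * (x i - peval_matrix T i))"
    using assms by (intro max_part_cong) (simp add: peval_matrix_def families_def peval_scale algebra_simps)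
  moreover have "gain (\<lambda>\<psi>. scale_pmodel \<alpha> (T \<psi>)) = \<alpha> * gain T"
    using assms unfolding gain_def sum_distrib_left
    by (intro sum.cong refl) (simp add: families_def peval_scale)
  ultimately show ?thesis
    using assms(2) by (simp add: excess_def max_part_scale distrib_left)
qed

lemma rho_scale: "0 < \<alpha> \<Longrightarrow> rho (\<lambda>i. \<alpha> * x i) \<le> \<alpha> * rho x"
proof -
  assume "0 < \<alpha>"
  have "rho (\<lambda>i. \<alpha> * x i) / \<alpha> \<le> rho x"
  proof (rule rho_greatest)
    fix T
    assume "T \<in> families"
    then have "(\<lambda>\<psi>. scale_pmodel \<alpha> (T \<psi>)) \<in> families"
      using \<open>0 < \<alpha>\<close> by (simp add: families_def pointed_model_scale)
    then have "rho (\<lambda>i. \<alpha> * x i) \<le> excess (\<lambda>i. \<alpha> * x i) (\<lambda>\<psi>. scale_pmodel \<alpha> (T \<psi>))"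
      by (rule rho_le_excess)
    also have "\<dots> = \<alpha> * excess x T"
      using excess_scale[OF \<open>T \<in> families\<close>] \<open>0 < \<alpha>\<close> by simp
    finally
    show "rho (\<lambda>i. \<alpha> * x i) / \<alpha> \<le> excess x T"
      using \<open>0 < \<alpha>\<close> by (simp add: divide_simps mult.commute)
  qed
  then show ?thesis
    using \<open>0 < \<alpha>\<close> by (simp add: divide_simps mult.commute)
qed

lemma rho_single_model:
  assumes "\<psi>0 \<in> S" "pointed_model t"
  shows "rho (\<lambda>(\<phi>, \<psi>). if \<psi> = \<psi>0 then peval \<phi> t else 0) \<le> c \<psi>0 * peval \<psi>0 t"
proof -
  define T where "T = (\<lambda>\<psi>. if \<psi> = \<psi>0 then t else zero_pmodel)"
  have "T \<in> families"
    using assms(2) by (simp add: T_def families_def pointed_model_zero)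
  moreover have "peval_matrix T = (\<lambda>(\<phi>, \<psi>). if \<psi> = \<psi>0 then peval \<phi> t else 0)"
    by (auto simp: peval_matrix_def T_def)
  ultimately have "rho (\<lambda>(\<phi>, \<psi>). if \<psi> = \<psi>0 then peval \<phi> t else 0) \<le> excess (peval_matrix T) T"
    using rho_le_excess by metis
  also have "\<dots> = c \<psi>0 * peval \<psi>0 t"
    unfolding excess_def gain_def using finite_S assms(1)
    by (simp add: max_part_zero T_def if_distrib cong: if_cong)
  finally show ?thesis .
qed

theorem box_weights_exist:
  obtains \<mu> where "\<And>\<phi> \<psi>. \<phi> \<in> D \<Longrightarrow> \<psi> \<in> S \<Longrightarrow> 0 \<le> \<mu> \<phi> \<psi>"
    "\<And>\<phi>. \<phi> \<in> D \<Longrightarrow> (\<Sum>\<psi>\<in>S. \<mu> \<phi> \<psi>) = d \<phi>"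
    "\<And>\<psi> t. \<psi> \<in> S \<Longrightarrow> pointed_model t \<Longrightarrow> (\<Sum>\<phi>\<in>D. \<mu> \<phi> \<psi> * peval \<phi> t) \<le> c \<psi> * peval \<psi> t"
proof -
  obtain a where a: "\<And>x. (\<forall>i. i \<notin> D \<times> S \<longrightarrow> x i = 0) \<Longrightarrow> (\<Sum>i\<in>D \<times> S. a i * x i) \<le> rho x"
    using Hahn_Banach_finite[of "D \<times> S" rho] finite_D finite_S rho_add rho_scale by blast
  have "(\<Sum>\<phi>\<in>D. a (\<phi>, \<psi>) * peval \<phi> t) \<le> c \<psi> * peval \<psi> t" if "\<psi> \<in> S" "pointed_model t" for \<psi> t
  proof -
    let ?x = "\<lambda>(\<phi>, \<psi>'). if \<psi>' = \<psi> then peval \<phi> t else 0"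
    have "(\<Sum>i\<in>D \<times> S. a i * ?x i) \<le> rho (\<lambda>i. if i \<in> D \<times> S then ?x i else 0)"
      using a[of "\<lambda>i. if i \<in> D \<times> S then ?x i else 0"] by (simp cong: sum.cong)
    also have "\<dots> = rho ?x"
      by (rule rho_cong) simp
    also have "\<dots> \<le> c \<psi> * peval \<psi> t"
      using that by (rule rho_single_model)
    moreover have "(\<Sum>i\<in>D \<times> S. a i * ?x i) = (\<Sum>\<phi>\<in>D. \<Sum>\<psi>'\<in>S. if \<psi>' = \<psi> then a (\<phi>, \<psi>') * peval \<phi> t else 0)"
      by (simp add: sum.cartesian_product split_def if_distrib cong: if_cong)
        (rule sum.cong; auto)
    moreover have "\<dots> = (\<Sum>\<phi>\<in>D. a (\<phi>, \<psi>) * peval \<phi> t)"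
      using finite_S that(1) by (simp add: sum.delta')
    ultimately show ?thesis by simp
  qed
  moreover have "(\<Sum>i\<in>D \<times> S. a i * x i) \<le> max_part x" if "\<forall>i. i \<notin> D \<times> S \<longrightarrow> x i = 0" for x
    using a[OF that] rho_le_max_part[of x] by linarith
  ultimately show ?thesis
    using that[of "\<lambda>\<phi> \<psi>. a (\<phi>, \<psi>)"] linear_below_max_part by blast
qed

end

section \<open>Real-weighted derivations\<close>

definition form_size :: "form \<Rightarrow> nat" where
  "form_size f = (\<Sum>\<theta>\<in>supp f. size \<theta>)"

text \<open>The form-level counterpart of the rules for \<open>\<rightarrow>\<close>: the weight of \<open>Imp \<phi> \<psi>\<close> moves to \<open>\<psi>\<close>
  and, negated, to \<open>\<phi>\<close>.\<close>

definition unfold_imp :: "form \<Rightarrow> fm \<Rightarrow> fm \<Rightarrow> form" where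
  "unfold_imp f \<phi> \<psi> = (\<lambda>\<theta>. f \<theta> - (if \<theta> = Imp \<phi> \<psi> then f (Imp \<phi> \<psi>) else 0)
      + (if \<theta> = \<psi> then f (Imp \<phi> \<psi>) else 0) - (if \<theta> = \<phi> then f (Imp \<phi> \<psi>) else 0))"

definition box_premise :: "form \<Rightarrow> (fm \<Rightarrow> fm \<Rightarrow> real) \<Rightarrow> fm \<Rightarrow> form" where
  "box_premise f \<mu> \<psi> = (\<lambda>\<theta>. (if \<theta> = \<psi> then max (f (Box \<psi>)) 0 else 0) - \<mu> \<theta> \<psi>)"

text \<open>In the box step all weight sits on boxes;
  \<open>\<mu> \<theta> \<psi>\<close> splits the negative weight of \<open>Box \<theta>\<close> among the positively weighted boxes
  \<open>Box \<psi>\<close>, and the premise for \<open>\<psi>\<close> is the unboxed sequent that the rule \<open>(\<box>\<^sub>n)\<close> turns into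
  its share of the conclusion. Padding \<open>S\<close> beyond the positive boxes is allowed.\<close>

inductive wderiv :: "real set \<Rightarrow> form \<Rightarrow> bool" for K where
  imp: "wderiv K (unfold_imp f \<phi> \<psi>) \<Longrightarrow> finite (supp f) \<Longrightarrow> range f \<subseteq> K \<Longrightarrow> wderiv K f"
| box: "finite (supp f) \<Longrightarrow> range f \<subseteq> K \<Longrightarrow> supp f \<subseteq> range Box \<Longrightarrow> finite S
    \<Longrightarrow> (\<And>\<psi>. 0 < f (Box \<psi>) \<Longrightarrow> \<psi> \<in> S)
    \<Longrightarrow> (\<And>\<theta> \<psi>. 0 \<le> \<mu> \<theta> \<psi>) \<Longrightarrow> (\<And>\<theta> \<psi>. \<psi> \<notin> S \<Longrightarrow> \<mu> \<theta> \<psi> = 0) \<Longrightarrow> (\<And>\<theta> \<psi>. \<mu> \<theta> \<psi> \<in> K)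
    \<Longrightarrow> (\<And>\<theta>. (\<Sum>\<psi>\<in>S. \<mu> \<theta> \<psi>) = max (- f (Box \<theta>)) 0)
    \<Longrightarrow> (\<And>\<psi>. \<psi> \<in> S \<Longrightarrow> wderiv K (box_premise f \<mu> \<psi>)) \<Longrightarrow> wderiv K f"

lemma wderiv_finite_supp: "wderiv K f \<Longrightarrow> finite (supp f)"
  by (induction rule: wderiv.induct) auto

lemma wderiv_zero: "0 \<in> K \<Longrightarrow> wderiv K (\<lambda>_. 0)"
  by (rule wderiv.box[where S = "{}" and \<mu> = "\<lambda>_ _. 0"]) (auto simp: supp_def)

lemma Imp_neq_left [simp]: "Imp \<phi> \<psi> \<noteq> \<phi>" and Imp_neq_right [simp]: "Imp \<phi> \<psi> \<noteq> \<psi>"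
  by (auto dest: arg_cong[where f = size])

lemma supp_unfold_imp: "supp (unfold_imp f \<phi> \<psi>) \<subseteq> (supp f - {Imp \<phi> \<psi>}) \<union> {\<phi>, \<psi>}"
  unfolding supp_def unfold_imp_def by auto

lemma form_size_unfold_imp_less:
  assumes "finite (supp f)" "f (Imp \<phi> \<psi>) \<noteq> 0"
  shows "form_size (unfold_imp f \<phi> \<psi>) < form_size f"
proof -
  let ?I = "Imp \<phi> \<psi>"
  have "form_size (unfold_imp f \<phi> \<psi>) \<le> (\<Sum>\<theta>\<in>(supp f - {?I}) \<union> {\<phi>, \<psi>}. size \<theta>)"
    unfolding form_size_def using supp_unfold_imp assms(1) by (intro sum_mono2) auto
  also have "\<dots> \<le> (\<Sum>\<theta>\<in>supp f - {?I}. size \<theta>) + (\<Sum>\<theta>\<in>{\<phi>, \<psi>}. size \<theta>)"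
    by (subst sum_Un_nat) (use assms(1) in auto)
  also have "\<dots> \<le> (\<Sum>\<theta>\<in>supp f - {?I}. size \<theta>) + (size \<phi> + size \<psi>)"
    by (cases "\<phi> = \<psi>") auto
  also have "\<dots> < (\<Sum>\<theta>\<in>supp f - {?I}. size \<theta>) + size ?I"
    by simp
  also have "\<dots> = form_size f"
    using assms by (simp add: form_size_def supp_def sum.remove)
  finally show ?thesis .
qed

lemma form_eval_unfold_imp:
  assumes "finite (supp f)"
  shows "form_eval W R V (unfold_imp f \<phi> \<psi>) x = form_eval W R V f x"
proof -
  let ?I = "Imp \<phi> \<psi>"
  let ?X = "supp f \<union> {?I, \<phi>, \<psi>}"
  let ?e = "\<lambda>\<theta>. eval W R V \<theta> x"
  have "finite ?X"
    using assms by simp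
  have change: "(unfold_imp f \<phi> \<psi> \<theta> - f \<theta>) * ?e \<theta> = (if \<theta> = \<psi> then f ?I * ?e \<psi> else 0)
      - (if \<theta> = ?I then f ?I * ?e ?I else 0) - (if \<theta> = \<phi> then f ?I * ?e \<phi> else 0)" for \<theta>
    by (simp add: unfold_imp_def algebra_simps)
  have "form_eval W R V (unfold_imp f \<phi> \<psi>) x - form_eval W R V f x
      = (\<Sum>\<theta>\<in>?X. (unfold_imp f \<phi> \<psi> \<theta> - f \<theta>) * ?e \<theta>)"
    using \<open>finite ?X\<close> supp_unfold_imp
    by (subst (1 2) form_eval_superset[of ?X]) (auto simp: sum_subtractf[symmetric] left_diff_distrib)
  also have "\<dots> = f ?I * (?e \<psi> - ?e \<phi> - ?e ?I)"
    using \<open>finite ?X\<close> by (simp only: change sum_subtractf) (simp add: algebra_simps)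
  also have "\<dots> = 0"
    by simp
  finally show ?thesis
    by simp
qed

lemma finite_vimage_Box: "finite A \<Longrightarrow> finite (Box -` A)"
  by (rule finite_vimageI) (simp_all add: inj_on_def)

lemma form_size_less_unboxed:
  assumes "finite (supp f)" "supp f \<subseteq> range Box" "supp f \<noteq> {}" "supp g \<subseteq> Box -` supp f"
  shows "form_size g < form_size f"
proof -
  have fin: "finite (Box -` supp f)"
    using assms(1) by (rule finite_vimage_Box)
  have boxed: "supp f = Box ` (Box -` supp f)"
    using assms(2) by auto
  then have "Box -` supp f \<noteq> {}"
    using assms(3) by force
  have "form_size g \<le> (\<Sum>\<theta>\<in>Box -` supp f. size \<theta>)"
    unfolding form_size_def using assms(4) fin by (intro sum_mono2) auto
  also have "\<dots> < (\<Sum>\<theta>\<in>Box -` supp f. size (Box \<theta>))"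
    using fin \<open>Box -` supp f \<noteq> {}\<close> by (intro sum_strict_mono) auto
  also have "\<dots> = (\<Sum>\<theta>\<in>Box ` (Box -` supp f). size \<theta>)"
    by (subst sum.reindex) (auto simp: inj_on_def o_def)
  also have "\<dots> = form_size f"
    unfolding form_size_def by (simp only: boxed[symmetric])
  finally show ?thesis .
qed

lemma supp_box_premise:
  "(\<And>\<theta>. \<theta> \<notin> D \<Longrightarrow> \<mu> \<theta> \<psi> = 0) \<Longrightarrow> supp (box_premise f \<mu> \<psi>) \<subseteq> insert \<psi> D"
  by (auto simp: supp_def box_premise_def split: if_splits)

lemma form_eval_box_premise:
  assumes "finite D" "\<And>\<theta>. \<theta> \<notin> D \<Longrightarrow> \<mu> \<theta> \<psi> = 0"
  shows "form_eval W R V (box_premise f \<mu> \<psi>) x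
    = max (f (Box \<psi>)) 0 * eval W R V \<psi> x - (\<Sum>\<theta>\<in>D. \<mu> \<theta> \<psi> * eval W R V \<theta> x)"
proof -
  let ?e = "\<lambda>\<theta>. eval W R V \<theta> x"
  have "form_eval W R V (box_premise f \<mu> \<psi>) x
      = (\<Sum>\<theta>\<in>insert \<psi> D. (if \<theta> = \<psi> then max (f (Box \<psi>)) 0 * ?e \<psi> else 0) - \<mu> \<theta> \<psi> * ?e \<theta>)"
    using assms supp_box_premise[of D \<mu> \<psi> f]
    by (subst form_eval_superset[of "insert \<psi> D"]) (auto simp: box_premise_def left_diff_distrib intro!: sum.cong)
  also have "\<dots> = max (f (Box \<psi>)) 0 * ?e \<psi> - (\<Sum>\<theta>\<in>insert \<psi> D. \<mu> \<theta> \<psi> * ?e \<theta>)"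
    using assms(1) by (simp add: sum_subtractf)
  also have "(\<Sum>\<theta>\<in>insert \<psi> D. \<mu> \<theta> \<psi> * ?e \<theta>) = (\<Sum>\<theta>\<in>D. \<mu> \<theta> \<psi> * ?e \<theta>)"
    using assms by (intro sum.mono_neutral_right) auto
  finally show ?thesis .
qed

lemma valid_box_form_Min_bound:
  fixes T :: "fm \<Rightarrow> pmodel"
  assumes valid: "form_valid f" and fin: "finite (supp f)" and boxed: "supp f \<subseteq> range Box"
    and "finite S" "S \<noteq> {}" and pos_S: "\<And>\<psi>. 0 < f (Box \<psi>) \<Longrightarrow> \<psi> \<in> S"
    and models: "\<forall>\<psi>\<in>S. pointed_model (T \<psi>)"
  shows "(\<Sum>\<phi>\<in>{\<phi>. f (Box \<phi>) < 0}. max (- f (Box \<phi>)) 0 * Min ((\<lambda>\<psi>. peval \<phi> (T \<psi>)) ` S))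
    \<le> (\<Sum>\<psi>\<in>S. max (f (Box \<psi>)) 0 * peval \<psi> (T \<psi>))"
proof -
  define Z where "Z = Box -` supp f"
  define M where "M \<chi> = Min ((\<lambda>\<psi>. peval \<chi> (T \<psi>)) ` S)" for \<chi>
  let ?c = "\<lambda>\<chi>. max (f (Box \<chi>)) 0" and ?d = "\<lambda>\<chi>. max (- f (Box \<chi>)) 0"
  have "finite Z"
    unfolding Z_def using fin by (rule finite_vimage_Box)
  have D_Z: "{\<phi>. f (Box \<phi>) < 0} \<subseteq> Z" and P_Z: "{\<psi>. 0 < f (Box \<psi>)} \<subseteq> Z"
    by (auto simp: Z_def supp_def)
  obtain t where "pointed_model t" and t_Box: "\<And>\<chi>. peval (Box \<chi>) t = M \<chi>"
    using pointed_model_Box_Min[OF \<open>finite S\<close> \<open>S \<noteq> {}\<close> models] unfolding M_def by blast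
  have "supp f = Box ` Z"
    using boxed by (auto simp: Z_def)
  then have "0 \<le> (\<Sum>\<chi>\<in>Z. f (Box \<chi>) * M \<chi>)"
    using form_valid_pointed_model[OF valid \<open>pointed_model t\<close>] by (simp add: sum.reindex inj_on_def t_Box)
  also have "\<dots> = (\<Sum>\<chi>\<in>Z. ?c \<chi> * M \<chi>) - (\<Sum>\<chi>\<in>Z. ?d \<chi> * M \<chi>)"
    by (simp add: sum_subtractf[symmetric] left_diff_distrib[symmetric])
      (rule sum.cong; simp add: max_def)
  also have "(\<Sum>\<chi>\<in>Z. ?d \<chi> * M \<chi>) = (\<Sum>\<chi>\<in>{\<phi>. f (Box \<phi>) < 0}. ?d \<chi> * M \<chi>)"
    using \<open>finite Z\<close> D_Z by (intro sum.mono_neutral_right) auto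
  also have "(\<Sum>\<chi>\<in>Z. ?c \<chi> * M \<chi>) \<le> (\<Sum>\<chi>\<in>Z. ?c \<chi> * peval \<chi> (T \<chi>))"
  proof (intro sum_mono)
    fix \<chi>
    show "?c \<chi> * M \<chi> \<le> ?c \<chi> * peval \<chi> (T \<chi>)"
    proof (cases "0 < f (Box \<chi>)")
      case True
      then have "M \<chi> \<le> peval \<chi> (T \<chi>)"
        unfolding M_def using \<open>finite S\<close> pos_S by (intro Min_le) auto
      then show ?thesis
        by (intro mult_left_mono) auto
    qed simp
  qed
  also have "(\<Sum>\<chi>\<in>Z. ?c \<chi> * peval \<chi> (T \<chi>)) = (\<Sum>\<chi>\<in>S. ?c \<chi> * peval \<chi> (T \<chi>))"
  proof -
    have "(\<Sum>\<chi>\<in>Z. ?c \<chi> * peval \<chi> (T \<chi>)) = (\<Sum>\<chi>\<in>{\<psi>. 0 < f (Box \<psi>)}. ?c \<chi> * peval \<chi> (T \<chi>))"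
      using \<open>finite Z\<close> P_Z by (intro sum.mono_neutral_right) auto
    also have "\<dots> = (\<Sum>\<chi>\<in>S. ?c \<chi> * peval \<chi> (T \<chi>))"
      using \<open>finite S\<close> pos_S by (intro sum.mono_neutral_left) auto
    finally show ?thesis .
  qed
  finally show ?thesis
    unfolding M_def by linarith
qed

lemma valid_box_form_split:
  assumes valid: "form_valid f" and fin: "finite (supp f)" and boxed: "supp f \<subseteq> range Box"
  obtains S \<mu> where "finite S" "\<And>\<psi>. 0 < f (Box \<psi>) \<Longrightarrow> \<psi> \<in> S"
    "\<And>\<theta> \<psi>. 0 \<le> \<mu> \<theta> \<psi>" "\<And>\<theta> \<psi>. \<psi> \<notin> S \<Longrightarrow> \<mu> \<theta> \<psi> = 0"
    "\<And>\<theta>. (\<Sum>\<psi>\<in>S. \<mu> \<theta> \<psi>) = max (- f (Box \<theta>)) 0"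
    "\<And>\<psi>. \<psi> \<in> S \<Longrightarrow> form_valid (box_premise f \<mu> \<psi>)"
    "\<And>\<psi>. supp (box_premise f \<mu> \<psi>) \<subseteq> Box -` supp f"
proof -
  define D where "D = {\<phi>. f (Box \<phi>) < 0}"
  \<comment> \<open>\<open>Var 0\<close> only keeps \<open>S\<close> nonempty, so that the minima over \<open>S\<close> make sense.\<close>
  define S where "S = insert (Var 0) {\<psi>. 0 < f (Box \<psi>)}"
  have "finite (Box -` supp f)"
    using fin by (rule finite_vimage_Box)
  moreover have "D \<subseteq> Box -` supp f" "{\<psi>. 0 < f (Box \<psi>)} \<subseteq> Box -` supp f"
    by (auto simp: D_def supp_def)
  ultimately have "finite D" "finite S"
    by (auto simp: S_def intro: finite_subset)
  have pos_S: "0 < f (Box \<psi>) \<Longrightarrow> \<psi> \<in> S" for \<psi>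
    by (simp add: S_def)
  interpret box_split S D "\<lambda>\<psi>. max (f (Box \<psi>)) 0" "\<lambda>\<phi>. max (- f (Box \<phi>)) 0"
    using \<open>finite S\<close> \<open>finite D\<close> valid_box_form_Min_bound[OF valid fin boxed \<open>finite S\<close> _ pos_S]
    by unfold_locales (auto simp: S_def D_def)
  obtain \<mu>0 where \<mu>0_nonneg: "\<And>\<phi> \<psi>. \<phi> \<in> D \<Longrightarrow> \<psi> \<in> S \<Longrightarrow> 0 \<le> \<mu>0 \<phi> \<psi>"
    and \<mu>0_row: "\<And>\<phi>. \<phi> \<in> D \<Longrightarrow> (\<Sum>\<psi>\<in>S. \<mu>0 \<phi> \<psi>) = max (- f (Box \<phi>)) 0"
    and \<mu>0_premise: "\<And>\<psi> t. \<psi> \<in> S \<Longrightarrow> pointed_model t \<Longrightarrow>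
      (\<Sum>\<phi>\<in>D. \<mu>0 \<phi> \<psi> * peval \<phi> t) \<le> max (f (Box \<psi>)) 0 * peval \<psi> t"
    using box_weights_exist by blast
  define \<mu> where "\<mu> \<theta> \<psi> = (if \<theta> \<in> D \<and> \<psi> \<in> S then \<mu>0 \<theta> \<psi> else 0)" for \<theta> \<psi>
  show ?thesis
  proof (rule that[of S \<mu>])
    show "(\<Sum>\<psi>\<in>S. \<mu> \<theta> \<psi>) = max (- f (Box \<theta>)) 0" for \<theta>
      using \<mu>0_row by (cases "\<theta> \<in> D") (auto simp: \<mu>_def D_def)
    show "form_valid (box_premise f \<mu> \<psi>)" if "\<psi> \<in> S" for \<psi>
      unfolding form_valid_def
    proof (intro allI impI ballI)
      fix W R V x
      assume "is_model W R V" "x \<in> W"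
      then have "(\<Sum>\<phi>\<in>D. \<mu>0 \<phi> \<psi> * eval W R V \<phi> x) \<le> max (f (Box \<psi>)) 0 * eval W R V \<psi> x"
        using \<mu>0_premise[OF that pointed_modelI] by (simp add: peval_def)
      moreover have "(\<Sum>\<phi>\<in>D. \<mu> \<phi> \<psi> * eval W R V \<phi> x) = (\<Sum>\<phi>\<in>D. \<mu>0 \<phi> \<psi> * eval W R V \<phi> x)"
        using that by (simp add: \<mu>_def)
      ultimately show "0 \<le> form_eval W R V (box_premise f \<mu> \<psi>) x"
        by (simp add: form_eval_box_premise[OF \<open>finite D\<close>] \<mu>_def)
    qed
    show "supp (box_premise f \<mu> \<psi>) \<subseteq> Box -` supp f" for \<psi>
      by (auto simp: supp_def box_premise_def \<mu>_def D_def split: if_splits)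
  qed (use \<open>finite S\<close> pos_S \<mu>0_nonneg in \<open>auto simp: \<mu>_def\<close>)
qed

theorem form_valid_wderiv: "form_valid f \<Longrightarrow> finite (supp f) \<Longrightarrow> wderiv UNIV f"
proof (induction "form_size f" arbitrary: f rule: less_induct)
  case less
  show ?case
  proof (cases "\<exists>\<phi> \<psi>. f (Imp \<phi> \<psi>) \<noteq> 0")
    case True
    then obtain \<phi> \<psi> where "f (Imp \<phi> \<psi>) \<noteq> 0" by blast
    have "form_valid (unfold_imp f \<phi> \<psi>)"
      using less.prems by (simp add: form_valid_def form_eval_unfold_imp)
    moreover have "finite (supp (unfold_imp f \<phi> \<psi>))"
      by (rule finite_subset[OF supp_unfold_imp]) (use less.prems(2) in simp)
    ultimately have "wderiv UNIV (unfold_imp f \<phi> \<psi>)"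
      using less.hyps form_size_unfold_imp_less[OF less.prems(2) \<open>f (Imp \<phi> \<psi>) \<noteq> 0\<close>] by blast
    then show ?thesis
      using less.prems(2) by (rule wderiv.imp) simp
  next
    case False
    have boxed: "supp f \<subseteq> range Box"
    proof
      fix \<theta>
      assume "\<theta> \<in> supp f"
      then show "\<theta> \<in> range Box"
        using False form_valid_Var_weight[OF less.prems] by (cases \<theta>) (auto simp: supp_def)
    qed
    show ?thesis
    proof (cases "supp f = {}")
      case True
      then have "f = (\<lambda>_. 0)"
        by (auto simp: supp_def)
      then show ?thesis
        by (simp add: wderiv_zero)
    next
      case False
      obtain S \<mu> where split: "finite S" "\<And>\<psi>. 0 < f (Box \<psi>) \<Longrightarrow> \<psi> \<in> S"
        "\<And>\<theta> \<psi>. 0 \<le> \<mu> \<theta> \<psi>" "\<And>\<theta> \<psi>. \<psi> \<notin> S \<Longrightarrow> \<mu> \<theta> \<psi> = 0"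
        "\<And>\<theta>. (\<Sum>\<psi>\<in>S. \<mu> \<theta> \<psi>) = max (- f (Box \<theta>)) 0"
        and premise_valid: "\<And>\<psi>. \<psi> \<in> S \<Longrightarrow> form_valid (box_premise f \<mu> \<psi>)"
        and premise_supp: "\<And>\<psi>. supp (box_premise f \<mu> \<psi>) \<subseteq> Box -` supp f"
        using valid_box_form_split[OF less.prems boxed] by metis
      have premise_wderiv: "wderiv UNIV (box_premise f \<mu> \<psi>)" if "\<psi> \<in> S" for \<psi>
        using less.hyps[OF form_size_less_unboxed[OF less.prems(2) boxed False premise_supp]]
          premise_valid[OF that] finite_subset[OF premise_supp finite_vimage_Box[OF less.prems(2)]]
        by blast
      show ?thesis
        by (rule wderiv.box[OF less.prems(2) _ boxed split(1-4) _ split(5) premise_wderiv]) simp_all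
    qed
  qed
qed

section \<open>From real to rational weights\<close>

definition rat_linear :: "(real \<Rightarrow> real) \<Rightarrow> bool" where
  "rat_linear g \<longleftrightarrow> (\<forall>x y. g (x + y) = g x + g y) \<and> (\<forall>q x. q \<in> \<rat> \<longrightarrow> g (q * x) = q * g x)"

lemma rat_linear_add: "rat_linear g \<Longrightarrow> g (x + y) = g x + g y"
  unfolding rat_linear_def by blast

lemma rat_linear_zero: "rat_linear g \<Longrightarrow> g 0 = 0"
  using rat_linear_add[of g 0 0] by simp

lemma rat_linear_uminus: "rat_linear g \<Longrightarrow> g (- x) = - g x"
  using rat_linear_add[of g x "- x"] rat_linear_zero[of g] by simp

lemma rat_linear_diff: "rat_linear g \<Longrightarrow> g (x - y) = g x - g y"
  using rat_linear_add[of g x "- y"] rat_linear_uminus[of g y] by simp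

lemma rat_linear_sum: "rat_linear g \<Longrightarrow> g (\<Sum>i\<in>I. h i) = (\<Sum>i\<in>I. g (h i))"
  by (induction I rule: infinite_finite_induct) (auto simp: rat_linear_zero rat_linear_add)

lemma rat_linear_max_zero:
  assumes "rat_linear g" "sgn (g x) = sgn x"
  shows "g (max x 0) = max (g x) 0"
  using assms by (cases x "0::real" rule: linorder_cases) (auto simp: max_def rat_linear_zero sgn_if split: if_splits)

definition rationalizes :: "(real \<Rightarrow> real) \<Rightarrow> real set \<Rightarrow> bool" where
  "rationalizes g A \<longleftrightarrow> rat_linear g \<and> (\<forall>x\<in>A. sgn (g x) = sgn x \<and> g x \<in> \<rat>)"

interpretation rat_vs: vector_space "\<lambda>(q::rat) (x::real). of_rat q * x"
  by unfold_locales (auto simp: algebra_simps of_rat_add of_rat_mult)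

interpretation rat_vs_pair: vector_space_pair "\<lambda>(q::rat) (x::real). of_rat q * x" "\<lambda>(q::rat) (x::real). of_rat q * x"
  by unfold_locales

lemma rat_coordinates:
  assumes "finite A"
  obtains B r where "finite B" "1 \<in> B" "\<And>x. x \<in> A \<Longrightarrow> x = (\<Sum>b\<in>B. of_rat (r x b) * b)"
    "\<And>h. \<exists>g. rat_linear g \<and> (\<forall>b\<in>B. g b = h b)"
proof -
  obtain B where B: "{1} \<subseteq> B" "B \<subseteq> insert 1 A" "rat_vs.independent B" "insert 1 A \<subseteq> rat_vs.span B"
    using rat_vs.maximal_independent_subset_extend[of "{1}" "insert 1 A"] by auto
  have "finite B"
    using B(2) assms by (rule finite_subset[OF _ finite_insert[THEN iffD2]])
  have "\<exists>r. x = (\<Sum>b\<in>B. of_rat (r b) * b)" if "x \<in> A" for x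
    using B(4) that unfolding rat_vs.span_finite[OF \<open>finite B\<close>] by auto
  then obtain r where "\<And>x. x \<in> A \<Longrightarrow> x = (\<Sum>b\<in>B. of_rat (r x b) * b)"
    by metis
  moreover have "\<exists>g. rat_linear g \<and> (\<forall>b\<in>B. g b = h b)" for h
  proof -
    obtain g where g: "Vector_Spaces.linear (\<lambda>(q::rat) (x::real). of_rat q * x) (\<lambda>(q::rat) (x::real). of_rat q * x) g"
      and "\<forall>b\<in>B. g b = h b"
      using rat_vs_pair.linear_independent_extend[OF B(3)] by blast
    interpret g: Vector_Spaces.linear "\<lambda>(q::rat) (x::real). of_rat q * x" "\<lambda>(q::rat) (x::real). of_rat q * x" g
      by (rule g)
    have "rat_linear g"
      unfolding rat_linear_def using g.add g.scale by (auto elim!: Rats_cases)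
    then show ?thesis
      using \<open>\<forall>b\<in>B. g b = h b\<close> by blast
  qed
  ultimately show ?thesis
    using that \<open>finite B\<close> B(1) by blast
qed

lemma rat_approximants:
  assumes "0 < \<epsilon>"
  obtains h :: "real \<Rightarrow> real" where "\<And>b. h b \<in> \<rat>" "\<And>b. \<bar>h b - b\<bar> < \<epsilon>" "h 1 = 1"
proof -
  have "\<forall>b. \<exists>q\<in>\<rat>. b < q \<and> q < b + \<epsilon>"
    using assms by (auto intro: Rats_dense_in_real)
  then obtain q where q: "\<And>b. q b \<in> \<rat> \<and> b < q b \<and> q b < b + \<epsilon>"
    by metis
  show ?thesis
  proof (rule that[of "\<lambda>b. if b = 1 then 1 else q b"])
    show "\<bar>(if b = 1 then 1 else q b) - b\<bar> < \<epsilon>" for b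
      using q[of b] assms by auto
  qed (use q in auto)
qed

lemma rationalizing_map_exists:
  assumes "finite A"
  obtains g where "rationalizes g A" "\<And>q. q \<in> \<rat> \<Longrightarrow> g q = q"
proof -
  obtain B r where "finite B" "1 \<in> B" and coords: "\<And>x. x \<in> A \<Longrightarrow> x = (\<Sum>b\<in>B. of_rat (r x b) * b)"
    and extend: "\<And>h. \<exists>g. rat_linear g \<and> (\<forall>b\<in>B. g b = h b)"
    using rat_coordinates[OF assms] by blast
  define C where "C x = (\<Sum>b\<in>B. \<bar>of_rat (r x b) :: real\<bar>)" for x
  define M where "M = 1 + (\<Sum>x\<in>A. C x)"
  define \<delta> where "\<delta> = Min (insert 1 (abs ` (A - {0})))"
  have "0 \<le> C x" for x
    by (simp add: C_def sum_nonneg)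
  then have C_le: "C x \<le> M - 1" if "x \<in> A" for x
    unfolding M_def using assms that by (simp add: member_le_sum)
  have "0 < M"
    using \<open>\<And>x. 0 \<le> C x\<close> by (simp add: M_def sum_nonneg add_pos_nonneg)
  have "0 < \<delta>" and \<delta>_le: "\<And>x. x \<in> A \<Longrightarrow> x \<noteq> 0 \<Longrightarrow> \<delta> \<le> \<bar>x\<bar>"
    using assms by (auto simp: \<delta>_def)
  obtain h where h: "\<And>b. h b \<in> \<rat>" "\<And>b. \<bar>h b - b\<bar> < \<delta> / M" "h 1 = 1"
    using rat_approximants[of "\<delta> / M"] \<open>0 < \<delta>\<close> \<open>0 < M\<close> by auto
  obtain g where "rat_linear g" and g_B: "\<forall>b\<in>B. g b = h b"
    using extend by blast
  have g_coords: "g x = (\<Sum>b\<in>B. of_rat (r x b) * h b)" if "x \<in> A" for x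
  proof -
    have "g x = g (\<Sum>b\<in>B. of_rat (r x b) * b)"
      using coords[OF that] by (rule arg_cong)
    also have "\<dots> = (\<Sum>b\<in>B. of_rat (r x b) * h b)"
      using g_B \<open>rat_linear g\<close>
      by (simp add: rat_linear_sum[OF \<open>rat_linear g\<close>]) (simp add: rat_linear_def)
    finally show ?thesis .
  qed
  have close: "\<bar>g x - x\<bar> < \<delta>" if "x \<in> A" for x
  proof -
    have "\<bar>g x - x\<bar> = \<bar>\<Sum>b\<in>B. of_rat (r x b) * (h b - b)\<bar>"
      using g_coords[OF that] coords[OF that] by (simp add: algebra_simps sum_subtractf)
    also have "\<dots> \<le> (\<Sum>b\<in>B. \<bar>of_rat (r x b)\<bar> * (\<delta> / M))"
      by (intro order.trans[OF sum_abs] sum_mono)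
        (simp only: abs_mult, intro mult_left_mono less_imp_le h(2) abs_ge_zero)
    also have "\<dots> = C x * (\<delta> / M)"
      by (simp add: C_def sum_distrib_right sum_divide_distrib)
    also have "\<dots> < \<delta>"
      using C_le[OF that] \<open>0 < \<delta>\<close> \<open>0 < M\<close> by (simp add: field_simps)
    finally show ?thesis .
  qed
  have "sgn (g x) = sgn x \<and> g x \<in> \<rat>" if "x \<in> A" for x
  proof -
    have "g x \<in> \<rat>"
      unfolding g_coords[OF that] by (intro Rats_sum Rats_mult) (simp_all add: h(1))
    moreover have "sgn (g x) = sgn x"
      using close[OF that] \<delta>_le[OF that] rat_linear_zero[OF \<open>rat_linear g\<close>]
      by (cases x "0::real" rule: linorder_cases) (auto simp: sgn_if)
    ultimately show ?thesis by blast
  qed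
  moreover have "g q = q" if "q \<in> \<rat>" for q
  proof -
    have "g (q * 1) = q * g 1"
      using \<open>rat_linear g\<close> that unfolding rat_linear_def by blast
    then show ?thesis
      using g_B \<open>1 \<in> B\<close> h(3) by simp
  qed
  ultimately show ?thesis
    using that[of g] \<open>rat_linear g\<close> by (simp add: rationalizes_def)
qed

lemma sgn_eq_nonneg: "sgn x = sgn y \<Longrightarrow> 0 \<le> y \<Longrightarrow> 0 \<le> (x::real)"
  and sgn_eq_pos: "sgn x = sgn y \<Longrightarrow> 0 < y \<Longrightarrow> 0 < (x::real)"
   apply (subst zero_le_sgn_iff[symmetric], simp)
  apply (subst sgn_greater[symmetric], simp)
  done

lemma rationalizes_mono: "rationalizes g A \<Longrightarrow> B \<subseteq> A \<Longrightarrow> rationalizes g B"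
  unfolding rationalizes_def by blast

lemma rationalizes_value:
  assumes "rationalizes g A" "x \<in> A \<or> x = 0"
  shows "sgn (g x) = sgn x" "g x \<in> \<rat>"
proof -
  have "g 0 = 0" "\<forall>x\<in>A. sgn (g x) = sgn x \<and> g x \<in> \<rat>"
    using assms(1) rat_linear_zero unfolding rationalizes_def by blast+
  then show "sgn (g x) = sgn x" "g x \<in> \<rat>"
    using assms(2) by auto
qed

lemma supp_comp_rat_linear: "rat_linear g \<Longrightarrow> supp (g \<circ> f) \<subseteq> supp f"
  by (auto simp: supp_def rat_linear_zero)

lemma comp_unfold_imp: "rat_linear g \<Longrightarrow> g \<circ> unfold_imp f \<phi> \<psi> = unfold_imp (g \<circ> f) \<phi> \<psi>"
  by (simp add: fun_eq_iff unfold_imp_def rat_linear_add rat_linear_diff rat_linear_zero)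

lemma comp_box_premise:
  assumes "rat_linear g" "sgn (g (f (Box \<psi>))) = sgn (f (Box \<psi>))"
  shows "g \<circ> box_premise f \<mu> \<psi> = box_premise (g \<circ> f) (\<lambda>\<theta> \<psi>. g (\<mu> \<theta> \<psi>)) \<psi>"
  using assms by (simp add: fun_eq_iff box_premise_def rat_linear_diff rat_linear_zero rat_linear_max_zero)

lemma box_weight_nonzero:
  fixes f :: form and \<mu> :: "fm \<Rightarrow> fm \<Rightarrow> real"
  assumes "finite S" "\<And>\<theta> \<psi>. 0 \<le> \<mu> \<theta> \<psi>" "\<And>\<theta> \<psi>. \<psi> \<notin> S \<Longrightarrow> \<mu> \<theta> \<psi> = 0"
    and "(\<Sum>\<psi>\<in>S. \<mu> \<theta> \<psi>) = max (- f (Box \<theta>)) 0" "\<mu> \<theta> \<psi> \<noteq> 0"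
  shows "(\<theta>, \<psi>) \<in> {\<theta>. f (Box \<theta>) < 0} \<times> S"
proof -
  have "\<psi> \<in> S"
    using assms(3,5) by blast
  moreover have "(\<Sum>\<psi>\<in>S. \<mu> \<theta> \<psi>) \<noteq> 0"
  proof
    assume "(\<Sum>\<psi>\<in>S. \<mu> \<theta> \<psi>) = 0"
    moreover have "\<forall>\<psi>\<in>S. 0 \<le> \<mu> \<theta> \<psi>"
      using assms(2) by blast
    ultimately have "\<forall>\<psi>\<in>S. \<mu> \<theta> \<psi> = 0"
      using sum_nonneg_eq_0_iff[OF assms(1)] by blast
    then show False
      using assms(5) \<open>\<psi> \<in> S\<close> by blast
  qed
  then have "f (Box \<theta>) < 0"
    using assms(4) by (simp add: max_def split: if_splits)
  with \<open>\<psi> \<in> S\<close> show ?thesis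
    by simp
qed

lemma finite_negative_Box:
  fixes f :: form
  assumes "finite (supp f)"
  shows "finite {\<theta>. f (Box \<theta>) < 0}"
proof -
  have "{\<theta>. f (Box \<theta>) < 0} \<subseteq> Box -` supp f"
    by (auto simp: supp_def)
  then show ?thesis
    using finite_vimage_Box[OF assms] by (rule finite_subset)
qed

lemma wderiv_rationalize:
  "wderiv UNIV f \<Longrightarrow> \<exists>A. finite A \<and> (\<forall>g. rationalizes g A \<longrightarrow> wderiv \<rat> (g \<circ> f))"
proof (induction rule: wderiv.induct)
  case (imp f \<phi> \<psi>)
  then obtain A where "finite A" and IH: "\<And>g. rationalizes g A \<Longrightarrow> wderiv \<rat> (g \<circ> unfold_imp f \<phi> \<psi>)"
    by blast
  have "wderiv \<rat> (g \<circ> f)" if g: "rationalizes g (A \<union> f ` supp f)" for g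
  proof (rule wderiv.imp)
    have "rat_linear g"
      using g unfolding rationalizes_def by blast
    have "wderiv \<rat> (g \<circ> unfold_imp f \<phi> \<psi>)"
      by (rule IH, rule rationalizes_mono[OF g]) blast
    then show "wderiv \<rat> (unfold_imp (g \<circ> f) \<phi> \<psi>)"
      by (simp add: comp_unfold_imp[OF \<open>rat_linear g\<close>])
    show "finite (supp (g \<circ> f))"
      by (rule finite_subset[OF supp_comp_rat_linear[OF \<open>rat_linear g\<close>] imp.hyps(2)])
    show "range (g \<circ> f) \<subseteq> \<rat>"
      using rationalizes_value(2)[OF g] by (auto simp: supp_def)
  qed
  moreover have "finite (A \<union> f ` supp f)"
    using \<open>finite A\<close> imp.hyps(2) by simp
  ultimately show ?case
    by blast
next
  case (box f S \<mu>)
  have "\<forall>\<psi>\<in>S. \<exists>A. finite A \<and> (\<forall>g. rationalizes g A \<longrightarrow> wderiv \<rat> (g \<circ> box_premise f \<mu> \<psi>))"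
    using box.IH by blast
  then obtain A where "\<forall>\<psi>\<in>S. finite (A \<psi>)"
    and IH: "\<And>\<psi> g. \<psi> \<in> S \<Longrightarrow> rationalizes g (A \<psi>) \<Longrightarrow> wderiv \<rat> (g \<circ> box_premise f \<mu> \<psi>)"
    by (metis bchoice)
  define A' where "A' = (\<Union>\<psi>\<in>S. A \<psi>) \<union> f ` supp f \<union> (\<lambda>(\<theta>, \<psi>). \<mu> \<theta> \<psi>) ` ({\<theta>. f (Box \<theta>) < 0} \<times> S)"
  have "wderiv \<rat> (g \<circ> f)" if g: "rationalizes g A'" for g
  proof -
    have "rat_linear g"
      using g unfolding rationalizes_def by blast
    have f_val: "sgn (g (f \<theta>)) = sgn (f \<theta>)" "g (f \<theta>) \<in> \<rat>" for \<theta>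
      using rationalizes_value[OF g, of "f \<theta>"] by (auto simp: A'_def supp_def)
    have "\<mu> \<theta> \<psi> \<in> A' \<or> \<mu> \<theta> \<psi> = 0" for \<theta> \<psi>
      using box_weight_nonzero[where f = f and S = S and \<mu> = \<mu>, OF box.hyps(4,6,7,9)] unfolding A'_def by (force simp: image_iff)
    note \<mu>_val = rationalizes_value[OF g this]
    have row: "(\<Sum>\<psi>\<in>S. g (\<mu> \<theta> \<psi>)) = max (- (g \<circ> f) (Box \<theta>)) 0" for \<theta>
    proof -
      have "sgn (g (- f (Box \<theta>))) = sgn (- f (Box \<theta>))"
        using f_val(1) by (simp add: rat_linear_uminus[OF \<open>rat_linear g\<close>] sgn_minus)
      then have "g (max (- f (Box \<theta>)) 0) = max (- (g \<circ> f) (Box \<theta>)) 0"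
        by (simp add: rat_linear_max_zero[OF \<open>rat_linear g\<close>] rat_linear_uminus[OF \<open>rat_linear g\<close>])
      then show ?thesis
        using box.hyps(9) rat_linear_sum[OF \<open>rat_linear g\<close>, of "\<mu> \<theta>" S] by simp
    qed
    show ?thesis
    proof (rule wderiv.box[where S = S and \<mu> = "\<lambda>\<theta> \<psi>. g (\<mu> \<theta> \<psi>)", OF _ _ _ box.hyps(4) _ _ _ _ row])
      show "finite (supp (g \<circ> f))"
        by (rule finite_subset[OF supp_comp_rat_linear[OF \<open>rat_linear g\<close>] box.hyps(1)])
      show "supp (g \<circ> f) \<subseteq> range Box"
        using supp_comp_rat_linear[OF \<open>rat_linear g\<close>] box.hyps(3) by (rule order.trans)
      show "range (g \<circ> f) \<subseteq> \<rat>" "\<And>\<theta> \<psi>. g (\<mu> \<theta> \<psi>) \<in> \<rat>"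
        using f_val(2) \<mu>_val(2) by auto
      show "0 \<le> g (\<mu> \<theta> \<psi>)" for \<theta> \<psi>
        using \<mu>_val(1)[of \<theta> \<psi>] box.hyps(6)[of \<theta> \<psi>] by (rule sgn_eq_nonneg)
      show "0 < (g \<circ> f) (Box \<psi>) \<Longrightarrow> \<psi> \<in> S" for \<psi>
        using sgn_eq_pos[OF f_val(1)[of "Box \<psi>", symmetric]] box.hyps(5) by simp
      show "\<psi> \<notin> S \<Longrightarrow> g (\<mu> \<theta> \<psi>) = 0" for \<theta> \<psi>
        using box.hyps(7) rat_linear_zero[OF \<open>rat_linear g\<close>] by simp
      show "wderiv \<rat> (box_premise (g \<circ> f) (\<lambda>\<theta> \<psi>. g (\<mu> \<theta> \<psi>)) \<psi>)" if "\<psi> \<in> S" for \<psi>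
      proof -
        have "wderiv \<rat> (g \<circ> box_premise f \<mu> \<psi>)"
          by (rule IH[OF that], rule rationalizes_mono[OF g]) (use that in \<open>auto simp: A'_def\<close>)
        then show ?thesis
          by (simp add: comp_box_premise[OF \<open>rat_linear g\<close> f_val(1)])
      qed
    qed
  qed
  moreover have "finite A'"
    unfolding A'_def using \<open>\<forall>\<psi>\<in>S. finite (A \<psi>)\<close> box.hyps(1,4) finite_cartesian_product[OF finite_negative_Box[OF box.hyps(1)] box.hyps(4)]
    by simp
  ultimately show ?case
    by blast
qed

section \<open>Clearing denominators\<close>

lemma rat_linear_mult: "rat_linear ((*) \<alpha>)"
  by (simp add: rat_linear_def algebra_simps)

lemma sgn_mult_pos: "0 < \<alpha> \<Longrightarrow> sgn ((\<alpha>::real) * x) = sgn x"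
  by (simp add: sgn_mult)

lemma supp_scale:
  fixes f :: form
  shows "\<alpha> \<noteq> 0 \<Longrightarrow> supp ((*) \<alpha> \<circ> f) = supp f"
  by (simp add: supp_def)

lemma wderiv_scale:
  assumes "wderiv K f" "0 < \<alpha>" "\<And>x. x \<in> K \<Longrightarrow> \<alpha> * x \<in> K'"
  shows "wderiv K' ((*) \<alpha> \<circ> f)"
  using assms(1)
proof (induction rule: wderiv.induct)
  case (imp f \<phi> \<psi>)
  show ?case
  proof (rule wderiv.imp[where \<phi> = \<phi> and \<psi> = \<psi>])
    show "wderiv K' (unfold_imp ((*) \<alpha> \<circ> f) \<phi> \<psi>)"
      using imp.IH by (simp only: comp_unfold_imp[OF rat_linear_mult, symmetric])
    show "finite (supp ((*) \<alpha> \<circ> f))"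
      using imp.hyps(2) assms(2) by (simp add: supp_scale)
    show "range ((*) \<alpha> \<circ> f) \<subseteq> K'"
      using imp.hyps(3) assms(3) by auto
  qed
next
  case (box f S \<mu>)
  show ?case
  proof (rule wderiv.box[where S = S and \<mu> = "\<lambda>\<theta> \<psi>. \<alpha> * \<mu> \<theta> \<psi>"])
    show "finite (supp ((*) \<alpha> \<circ> f))" "supp ((*) \<alpha> \<circ> f) \<subseteq> range Box"
      using box.hyps(1,3) assms(2) by (simp_all add: supp_scale)
    show "range ((*) \<alpha> \<circ> f) \<subseteq> K'" "\<And>\<theta> \<psi>. \<alpha> * \<mu> \<theta> \<psi> \<in> K'"
      using box.hyps(2,8) assms(3) by auto
    show "(\<Sum>\<psi>\<in>S. \<alpha> * \<mu> \<theta> \<psi>) = max (- ((*) \<alpha> \<circ> f) (Box \<theta>)) 0" for \<theta>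
      using box.hyps(9)[of \<theta>] assms(2) by (simp add: sum_distrib_left[symmetric] max_mult_distrib_left)
    show "wderiv K' (box_premise ((*) \<alpha> \<circ> f) (\<lambda>\<theta> \<psi>. \<alpha> * \<mu> \<theta> \<psi>) \<psi>)" if "\<psi> \<in> S" for \<psi>
      using box.IH[OF that] comp_box_premise[OF rat_linear_mult sgn_mult_pos[OF assms(2)]] by simp
  qed (use box.hyps(4-7) assms(2) in \<open>auto simp: zero_less_mult_iff\<close>)
qed

definition frac_Ints :: "nat \<Rightarrow> real set" where
  "frac_Ints N = {x. real N * x \<in> \<int>}"

lemma zero_in_frac_Ints [simp]: "0 \<in> frac_Ints N"
  by (simp add: frac_Ints_def)

lemma frac_Ints_dvd:
  assumes "M dvd N"
  shows "frac_Ints M \<subseteq> frac_Ints N"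
proof
  fix x
  assume "x \<in> frac_Ints M"
  obtain k where "N = M * k"
    using assms by blast
  then have "real N * x = real k * (real M * x)"
    by simp
  moreover have "real M * x \<in> \<int>"
    using \<open>x \<in> frac_Ints M\<close> by (simp add: frac_Ints_def)
  then have "real k * (real M * x) \<in> \<int>"
    by (rule Ints_mult[OF Ints_of_nat])
  ultimately show "x \<in> frac_Ints N"
    by (simp only: frac_Ints_def mem_Collect_eq)
qed

lemma rat_common_denominator:
  assumes "finite X" "X \<subseteq> \<rat>"
  obtains M where "0 < M" "X \<subseteq> frac_Ints M"
proof -
  have "\<exists>M::nat. 0 < M \<and> (\<forall>x\<in>X. real M * x \<in> \<int>)"
    using assms
  proof (induction X rule: finite_induct)
    case (insert x X)
    then obtain M :: nat where "0 < M" "\<forall>y\<in>X. real M * y \<in> \<int>"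
      by auto
    obtain a b where "0 < b" "x = of_int a / of_int b"
      using insert.prems by (auto elim: Rats_cases')
    have "real (M * nat b) * x = of_int (int M * a)"
      using \<open>0 < b\<close> \<open>x = of_int a / of_int b\<close> by simp
    then have "real (M * nat b) * x \<in> \<int>"
      by (metis Ints_of_int)
    moreover have "real (M * nat b) * y \<in> \<int>" if "y \<in> X" for y
    proof -
      have "real (M * nat b) * y = of_int b * (real M * y)"
        using \<open>0 < b\<close> by simp
      moreover have "of_int b * (real M * y) \<in> \<int>"
        using \<open>\<forall>y\<in>X. real M * y \<in> \<int>\<close> that by (intro Ints_mult[OF Ints_of_int]) blast
      ultimately show ?thesis
        by (simp only:)
    qed
    ultimately show ?case
      using \<open>0 < M\<close> \<open>0 < b\<close> by (intro exI[of _ "M * nat b"]) auto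
  qed (auto intro: exI[of _ 1])
  then show ?thesis
    using that by (auto simp: frac_Ints_def)
qed

lemma range_subset_supp:
  fixes f :: form
  assumes "f ` supp f \<subseteq> A" "0 \<in> A"
  shows "range f \<subseteq> A"
proof clarify
  fix \<theta>
  show "f \<theta> \<in> A"
    using assms by (cases "f \<theta> = 0") (auto simp: supp_def)
qed

lemma wderiv_mono: "wderiv K f \<Longrightarrow> K \<subseteq> K' \<Longrightarrow> wderiv K' f"
proof (induction rule: wderiv.induct)
  case (imp f \<phi> \<psi>)
  show ?case
    by (rule wderiv.imp[where \<phi> = \<phi> and \<psi> = \<psi>]) (use imp in auto)
next
  case (box f S \<mu>)
  show ?case
    by (rule wderiv.box[where S = S and \<mu> = \<mu>]) (use box in auto)
qed

lemma wderiv_rat_frac_Ints: "wderiv \<rat> f \<Longrightarrow> \<exists>N. 0 < N \<and> wderiv (frac_Ints N) f"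
proof (induction rule: wderiv.induct)
  case (imp f \<phi> \<psi>)
  then obtain N where "0 < N" "wderiv (frac_Ints N) (unfold_imp f \<phi> \<psi>)"
    by blast
  have "f ` supp f \<subseteq> \<rat>"
    using imp.hyps(3) by auto
  then obtain M where "0 < M" "f ` supp f \<subseteq> frac_Ints M"
    using rat_common_denominator[OF finite_imageI[OF imp.hyps(2)]] by blast
  have "range f \<subseteq> frac_Ints (M * N)"
    using \<open>f ` supp f \<subseteq> frac_Ints M\<close> frac_Ints_dvd[of M "M * N"] by (intro range_subset_supp) auto
  moreover have "wderiv (frac_Ints (M * N)) (unfold_imp f \<phi> \<psi>)"
    using \<open>wderiv (frac_Ints N) (unfold_imp f \<phi> \<psi>)\<close> frac_Ints_dvd[of N "M * N"] by (simp add: wderiv_mono)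
  ultimately have "wderiv (frac_Ints (M * N)) f"
    using imp.hyps(2) by (auto intro!: wderiv.imp[where \<phi> = \<phi> and \<psi> = \<psi>])
  then show ?case
    using \<open>0 < M\<close> \<open>0 < N\<close> by (intro exI[of _ "M * N"]) simp
next
  case (box f S \<mu>)
  have "\<forall>\<psi>\<in>S. \<exists>N. 0 < N \<and> wderiv (frac_Ints N) (box_premise f \<mu> \<psi>)"
    using box.IH by blast
  then obtain N' where N': "\<And>\<psi>. \<psi> \<in> S \<Longrightarrow> 0 < N' \<psi>"
    "\<And>\<psi>. \<psi> \<in> S \<Longrightarrow> wderiv (frac_Ints (N' \<psi>)) (box_premise f \<mu> \<psi>)"
    by metis
  define X where "X = f ` supp f \<union> (\<lambda>(\<theta>, \<psi>). \<mu> \<theta> \<psi>) ` ({\<theta>. f (Box \<theta>) < 0} \<times> S)"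
  have "finite X"
    using finite_cartesian_product[OF finite_negative_Box[OF box.hyps(1)] box.hyps(4)] box.hyps(1) by (simp add: X_def)
  moreover have "X \<subseteq> \<rat>"
    using box.hyps(2,8) by (auto simp: X_def)
  ultimately obtain M where "0 < M" "X \<subseteq> frac_Ints M"
    by (rule rat_common_denominator)
  define N where "N = M * (\<Prod>\<psi>\<in>S. N' \<psi>)"
  have "0 < N"
    using \<open>0 < M\<close> N'(1) by (simp add: N_def prod_pos)
  have X_N: "X \<subseteq> frac_Ints N"
    using \<open>X \<subseteq> frac_Ints M\<close> frac_Ints_dvd[of M N] by (auto simp: N_def)
  have "wderiv (frac_Ints N) f"
  proof (rule wderiv.box[where S = S and \<mu> = \<mu>])
    show "range f \<subseteq> frac_Ints N"
      using X_N by (intro range_subset_supp) (auto simp: X_def)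
    show "\<mu> \<theta> \<psi> \<in> frac_Ints N" for \<theta> \<psi>
    proof (cases "\<mu> \<theta> \<psi> = 0")
      case False
      then have "\<mu> \<theta> \<psi> \<in> X"
        using box_weight_nonzero[where f = f and S = S and \<mu> = \<mu>, OF box.hyps(4,6,7,9)] unfolding X_def by (force simp: image_iff)
      then show ?thesis
        using X_N by blast
    qed simp
    show "wderiv (frac_Ints N) (box_premise f \<mu> \<psi>)" if "\<psi> \<in> S" for \<psi>
    proof (rule wderiv_mono[OF N'(2)[OF that] frac_Ints_dvd])
      show "N' \<psi> dvd N"
        using box.hyps(4) that by (simp add: N_def dvd_prodI)
    qed
  qed (use box.hyps in auto)
  then show ?case
    using \<open>0 < N\<close> by blast
qed

section \<open>Integer forms as sequents\<close>

text \<open>An integer-valued form \<open>h\<close> stands for the sequent with \<open>-h \<theta>\<close> copies of \<open>\<theta>\<close> on the left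
  where \<open>h \<theta> < 0\<close> and \<open>h \<theta>\<close> copies on the right where \<open>h \<theta> > 0\<close>.\<close>

definition pos_mset :: "form \<Rightarrow> fm multiset" where
  "pos_mset h = (\<Sum>\<theta>\<in>supp h. replicate_mset (nat \<lfloor>h \<theta>\<rfloor>) \<theta>)"

definition derivable_form :: "form \<Rightarrow> bool" where
  "derivable_form h \<longleftrightarrow> derivable (pos_mset (- h)) (pos_mset h)"

lemma count_pos_mset: "finite (supp h) \<Longrightarrow> count (pos_mset h) \<theta> = nat \<lfloor>h \<theta>\<rfloor>"
  unfolding pos_mset_def by (auto simp: count_sum sum.delta supp_def)

lemma real_count_pos_mset:
  "finite (supp h) \<Longrightarrow> h \<theta> \<in> \<int> \<Longrightarrow> real (count (pos_mset h) \<theta>) = max (h \<theta>) 0"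
  by (auto simp: count_pos_mset elim!: Ints_cases)

lemma finite_supp_uminus: "finite (supp h) \<Longrightarrow> finite (supp (- h))"
  by (simp add: supp_def)

lemma derivable_add_both: "derivable \<Gamma> \<Delta> \<Longrightarrow> derivable (\<Gamma> + X) (\<Delta> + X)"
  using derivable.mix[OF _ derivable.id[of X], of \<Gamma> \<Delta>] by (simp add: add.commute[of X \<Delta>])

lemma derivable_by_form:
  assumes "finite (supp h)" "range h \<subseteq> \<int>" "derivable_form h"
    and "\<And>\<theta>. real (count R \<theta>) - real (count L \<theta>) = h \<theta>"
  shows "derivable L R"
proof -
  have "L = pos_mset (- h) + (L \<inter># R) \<and> R = pos_mset h + (L \<inter># R)"
  proof (intro conjI multiset_eqI)
    fix \<theta>
    have "h \<theta> \<in> \<int>"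
      using assms(2) by blast
    then have "real (count (pos_mset h) \<theta>) = max (h \<theta>) 0"
      "real (count (pos_mset (- h)) \<theta>) = max (- h \<theta>) 0"
      using assms(1) by (simp_all add: real_count_pos_mset finite_supp_uminus)
    then have "real (count L \<theta>) = real (count (pos_mset (- h) + (L \<inter># R)) \<theta>)"
      "real (count R \<theta>) = real (count (pos_mset h + (L \<inter># R)) \<theta>)"
      using assms(4)[of \<theta>] by (auto simp: max_def min_def)
    then show "count L \<theta> = count (pos_mset (- h) + (L \<inter># R)) \<theta>"
      "count R \<theta> = count (pos_mset h + (L \<inter># R)) \<theta>"
      by (simp_all only: of_nat_eq_iff)
  qed
  then show ?thesis
    using derivable_add_both[OF assms(3)[unfolded derivable_form_def], of "L \<inter># R"] by simp
qed

lemma derivable_imp_right_replicate: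
  "derivable (\<Gamma> + replicate_mset k \<phi>) (replicate_mset k \<psi> + \<Delta>) \<Longrightarrow>
    derivable \<Gamma> (replicate_mset k (Imp \<phi> \<psi>) + \<Delta>)"
proof (induction k arbitrary: \<Delta>)
  case (Suc k)
  have "derivable ((\<Gamma> + replicate_mset k \<phi>) + {#\<phi>#}) ({#\<psi>#} + (replicate_mset k \<psi> + \<Delta>))"
    using Suc.prems by (simp add: add_ac)
  then have "derivable (\<Gamma> + replicate_mset k \<phi>) ({#Imp \<phi> \<psi>#} + (replicate_mset k \<psi> + \<Delta>))"
    by (rule derivable.imp_right)
  then have "derivable \<Gamma> (replicate_mset k (Imp \<phi> \<psi>) + ({#Imp \<phi> \<psi>#} + \<Delta>))"
    by (intro Suc.IH) (simp add: add_ac)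
  then show ?case
    by (simp add: add_ac)
qed simp

lemma derivable_imp_left_replicate:
  "derivable (\<Gamma> + replicate_mset k \<psi>) (replicate_mset k \<phi> + \<Delta>) \<Longrightarrow>
    derivable (\<Gamma> + replicate_mset k (Imp \<phi> \<psi>)) \<Delta>"
proof (induction k arbitrary: \<Gamma>)
  case (Suc k)
  have "derivable ((\<Gamma> + replicate_mset k \<psi>) + {#\<psi>#}) ({#\<phi>#} + (replicate_mset k \<phi> + \<Delta>))"
    using Suc.prems by (simp add: add_ac)
  then have "derivable ((\<Gamma> + replicate_mset k \<psi>) + {#Imp \<phi> \<psi>#}) (replicate_mset k \<phi> + \<Delta>)"
    by (rule derivable.imp_left)
  then have "derivable ((\<Gamma> + {#Imp \<phi> \<psi>#}) + replicate_mset k (Imp \<phi> \<psi>)) \<Delta>"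
    by (intro Suc.IH) (simp add: add_ac)
  then show ?case
    by (simp add: add_ac)
qed simp

lemma pos_mset_split:
  assumes "finite (supp h)" "h \<theta>0 = real k"
  shows "pos_mset h = replicate_mset k \<theta>0 + pos_mset (h(\<theta>0 := 0))"
proof (rule multiset_eqI)
  fix \<theta>
  have "finite (supp (h(\<theta>0 := 0)))"
    using assms(1) by (rule finite_subset[rotated]) (auto simp: supp_def)
  then show "count (pos_mset h) \<theta> = count (replicate_mset k \<theta>0 + pos_mset (h(\<theta>0 := 0))) \<theta>"
    using assms by (simp add: count_pos_mset)
qed

lemma derivable_form_unfold_imp:
  assumes fin: "finite (supp h)" and int: "range h \<subseteq> \<int>"
    and der: "derivable_form (unfold_imp h \<phi> \<psi>)"
  shows "derivable_form h"
proof -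
  let ?I = "Imp \<phi> \<psi>"
  have fin': "finite (supp (unfold_imp h \<phi> \<psi>))"
    by (rule finite_subset[OF supp_unfold_imp]) (use fin in simp)
  have "h ?I \<in> \<int>"
    using int by blast
  then have int': "range (unfold_imp h \<phi> \<psi>) \<subseteq> \<int>"
    using int by (auto simp: unfold_imp_def)
  have fin0: "finite (supp (h(?I := 0)))"
    using fin by (rule finite_subset[rotated]) (auto simp: supp_def)
  have int_val: "h \<theta> \<in> \<int>" for \<theta>
    using int by blast
  have "finite (supp ((- h)(?I := 0)))"
    using fin by (rule finite_subset[rotated]) (auto simp: supp_def)
  then have count_neg0: "real (count (pos_mset ((- h)(?I := 0))) \<theta>) = max (((- h)(?I := 0)) \<theta>) 0" for \<theta>
    using int_val by (intro real_count_pos_mset) auto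
  have count_pos0: "real (count (pos_mset (h(?I := 0))) \<theta>) = max ((h(?I := 0)) \<theta>) 0" for \<theta>
    using fin0 int_val by (intro real_count_pos_mset) auto
  note counts = real_count_pos_mset[OF fin int_val] real_count_pos_mset[OF finite_supp_uminus[OF fin]]
    count_pos0 count_neg0
  consider "0 < h ?I" | "h ?I < 0" | "h ?I = 0"
    by linarith
  then show ?thesis
  proof cases
    case 1
    define k where "k = nat \<lfloor>h ?I\<rfloor>"
    have "h ?I = real k"
      using 1 \<open>h ?I \<in> \<int>\<close> by (auto simp: k_def elim!: Ints_cases)
    have "derivable (pos_mset (- h) + replicate_mset k \<phi>) (replicate_mset k \<psi> + pos_mset (h(?I := 0)))"
      using fin' int' der
    proof (rule derivable_by_form)
      show "real (count (replicate_mset k \<psi> + pos_mset (h(?I := 0))) \<theta>)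
          - real (count (pos_mset (- h) + replicate_mset k \<phi>) \<theta>) = unfold_imp h \<phi> \<psi> \<theta>" for \<theta>
        using \<open>h ?I = real k\<close> 1 int_val
        by (auto simp: counts unfold_imp_def max_def)
    qed
    then have "derivable (pos_mset (- h)) (replicate_mset k ?I + pos_mset (h(?I := 0)))"
      by (rule derivable_imp_right_replicate)
    then show ?thesis
      using pos_mset_split[OF fin \<open>h ?I = real k\<close>] by (simp add: derivable_form_def)
  next
    case 2
    define k where "k = nat \<lfloor>- h ?I\<rfloor>"
    have "(- h) ?I = real k"
      using 2 \<open>h ?I \<in> \<int>\<close> by (auto simp: k_def elim!: Ints_cases)
    have "derivable (pos_mset ((- h)(?I := 0)) + replicate_mset k \<psi>) (replicate_mset k \<phi> + pos_mset h)"
      using fin' int' der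
    proof (rule derivable_by_form)
      show "real (count (replicate_mset k \<phi> + pos_mset h) \<theta>)
          - real (count (pos_mset ((- h)(?I := 0)) + replicate_mset k \<psi>) \<theta>) = unfold_imp h \<phi> \<psi> \<theta>" for \<theta>
        using \<open>(- h) ?I = real k\<close> 2 int_val
        by (auto simp: counts unfold_imp_def max_def)
    qed
    then have "derivable (pos_mset ((- h)(?I := 0)) + replicate_mset k ?I) (pos_mset h)"
      by (rule derivable_imp_left_replicate)
    then show ?thesis
      unfolding derivable_form_def pos_mset_split[OF finite_supp_uminus[OF fin] \<open>(- h) ?I = real k\<close>]
      by (simp only: add.commute)
  next
    case 3
    then have "unfold_imp h \<phi> \<psi> = h"
      by (auto simp: unfold_imp_def fun_eq_iff)
    then show ?thesis
      using der by simp
  qed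
qed

lemma derivable_sum:
  "finite S \<Longrightarrow> (\<And>\<psi>. \<psi> \<in> S \<Longrightarrow> derivable (L \<psi>) (R \<psi>)) \<Longrightarrow>
    derivable (\<Sum>\<psi>\<in>S. L \<psi>) (\<Sum>\<psi>\<in>S. R \<psi>)"
proof (induction S rule: finite_induct)
  case (insert \<psi> S)
  then have "derivable (L \<psi> + (\<Sum>\<psi>\<in>S. L \<psi>)) ((\<Sum>\<psi>\<in>S. R \<psi>) + R \<psi>)"
    by (intro derivable.mix) auto
  then show ?case
    using insert.hyps by (simp add: add.commute)
qed (simp add: derivable.id)

lemma count_image_mset_Box:
  "count (image_mset Box M) \<theta> = (case \<theta> of Box \<chi> \<Rightarrow> count M \<chi> | _ \<Rightarrow> 0)"
  by (induction M) (auto split: fm.split)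

lemma derivable_form_box:
  assumes fin: "finite (supp f)" and int: "range f \<subseteq> \<int>" and boxed: "supp f \<subseteq> range Box"
    and "finite S" and pos_S: "\<And>\<psi>. 0 < f (Box \<psi>) \<Longrightarrow> \<psi> \<in> S"
    and \<mu>_nonneg: "\<And>\<theta> \<psi>. 0 \<le> \<mu> \<theta> \<psi>" and \<mu>_S: "\<And>\<theta> \<psi>. \<psi> \<notin> S \<Longrightarrow> \<mu> \<theta> \<psi> = 0"
    and \<mu>_int: "\<And>\<theta> \<psi>. \<mu> \<theta> \<psi> \<in> \<int>"
    and \<mu>_row: "\<And>\<theta>. (\<Sum>\<psi>\<in>S. \<mu> \<theta> \<psi>) = max (- f (Box \<theta>)) 0"
    and premise_der: "\<And>\<psi>. \<psi> \<in> S \<Longrightarrow> derivable_form (box_premise f \<mu> \<psi>)"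
  shows "derivable_form f"
proof -
  define D where "D = {\<theta>. f (Box \<theta>) < 0}"
  have "finite D"
    unfolding D_def using fin by (rule finite_negative_Box)
  have \<mu>_D: "\<mu> \<theta> \<psi> = 0" if "\<theta> \<notin> D" for \<theta> \<psi>
    using box_weight_nonzero[of S \<mu> \<theta> f \<psi>] \<open>finite S\<close> \<mu>_nonneg \<mu>_S \<mu>_row that by (auto simp: D_def)
  have f_int: "f \<theta> \<in> \<int>" for \<theta>
    using int by blast
  have f_Var: "f (Var p) = 0" and f_Imp: "f (Imp \<phi> \<psi>) = 0" for p \<phi> \<psi>
    using boxed by (auto simp: supp_def)
  define L where "L \<psi> = (\<Sum>\<theta>\<in>D. replicate_mset (nat \<lfloor>\<mu> \<theta> \<psi>\<rfloor>) \<theta>)" for \<psi>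
  define R where "R \<psi> = replicate_mset (nat \<lfloor>max (f (Box \<psi>)) 0\<rfloor>) \<psi>" for \<psi>
  have count_L: "real (count (L \<psi>) \<theta>) = \<mu> \<theta> \<psi>" for \<psi> \<theta>
    using \<open>finite D\<close> \<mu>_D[of \<theta> \<psi>] \<mu>_int[of \<theta> \<psi>] \<mu>_nonneg[of \<theta> \<psi>]
    by (auto simp: L_def count_sum elim!: Ints_cases)
  have count_R: "real (count (R \<psi>) \<theta>) = (if \<theta> = \<psi> then max (f (Box \<psi>)) 0 else 0)" for \<psi> \<theta>
    using f_int[of "Box \<psi>"] by (auto simp: R_def max_def elim!: Ints_cases)
  have "derivable (image_mset Box (L \<psi>)) (image_mset Box (R \<psi>))" if "\<psi> \<in> S" for \<psi>
  proof -
    have "derivable (L \<psi>) (R \<psi>)"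
    proof (rule derivable_by_form[OF _ _ premise_der[OF that]])
      show "finite (supp (box_premise f \<mu> \<psi>))"
        using supp_box_premise[of D \<mu> \<psi> f] \<mu>_D \<open>finite D\<close> finite_subset by blast
      show "range (box_premise f \<mu> \<psi>) \<subseteq> \<int>"
        using f_int \<mu>_int by (auto simp: box_premise_def max_def)
      show "real (count (R \<psi>) \<theta>) - real (count (L \<psi>) \<theta>) = box_premise f \<mu> \<psi> \<theta>" for \<theta>
        by (simp add: count_L count_R box_premise_def)
    qed
    then show ?thesis
      unfolding R_def by (simp add: derivable.box)
  qed
  then have "derivable (\<Sum>\<psi>\<in>S. image_mset Box (L \<psi>)) (\<Sum>\<psi>\<in>S. image_mset Box (R \<psi>))"
    by (rule derivable_sum[OF \<open>finite S\<close>])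
  moreover have "(\<Sum>\<psi>\<in>S. image_mset Box (L \<psi>)) = pos_mset (- f)"
  proof (rule multiset_eqI)
    fix \<theta>
    have "real (count (\<Sum>\<psi>\<in>S. image_mset Box (L \<psi>)) \<theta>) = max (- f \<theta>) 0"
      by (cases \<theta>) (simp_all add: count_sum count_image_mset_Box count_L \<mu>_row f_Var f_Imp)
    then show "count (\<Sum>\<psi>\<in>S. image_mset Box (L \<psi>)) \<theta> = count (pos_mset (- f)) \<theta>"
      using real_count_pos_mset[OF finite_supp_uminus[OF fin], of \<theta>] f_int[of \<theta>] by simp
  qed
  moreover have "(\<Sum>\<psi>\<in>S. image_mset Box (R \<psi>)) = pos_mset f"
  proof (rule multiset_eqI)
    fix \<theta>
    have "real (count (\<Sum>\<psi>\<in>S. image_mset Box (R \<psi>)) \<theta>) = max (f \<theta>) 0"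
      using pos_S \<open>finite S\<close>
      by (cases \<theta>) (auto simp: count_sum count_image_mset_Box count_R f_Var f_Imp max_def)
    then show "count (\<Sum>\<psi>\<in>S. image_mset Box (R \<psi>)) \<theta> = count (pos_mset f) \<theta>"
      using real_count_pos_mset[OF fin, of \<theta>] f_int[of \<theta>] by simp
  qed
  ultimately show ?thesis
    by (simp add: derivable_form_def)
qed

lemma wderiv_Ints_derivable_form: "wderiv \<int> f \<Longrightarrow> derivable_form f"
proof (induction rule: wderiv.induct)
  case (imp f \<phi> \<psi>)
  show ?case
    by (rule derivable_form_unfold_imp[where \<phi> = \<phi> and \<psi> = \<psi>]) (use imp in auto)
next
  case (box f S \<mu>)
  show ?case
    by (rule derivable_form_box[where S = S and \<mu> = \<mu>]) (use box in auto)
qed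

lemma derivable_repeat_cancel:
  assumes "0 < N" "derivable (repeat_mset N \<Gamma>) (repeat_mset N \<Delta>)"
  shows "derivable \<Gamma> \<Delta>"
proof (cases "N = 1")
  case False
  then have "2 \<le> N"
    using assms(1) by simp
  then show ?thesis
    using assms(2) by (rule derivable.sc)
qed (use assms in simp)

lemma wderiv_rat_valued:
  assumes "wderiv UNIV f" "range f \<subseteq> \<rat>"
  shows "wderiv \<rat> f"
proof -
  obtain A where "finite A" and A: "\<And>g. rationalizes g A \<Longrightarrow> wderiv \<rat> (g \<circ> f)"
    using wderiv_rationalize[OF assms(1)] by blast
  obtain g where "rationalizes g A" and g_rat: "\<And>q. q \<in> \<rat> \<Longrightarrow> g q = q"
    using rationalizing_map_exists[OF \<open>finite A\<close>] by blast
  have "g \<circ> f = f"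
    using assms(2) g_rat by (auto simp: fun_eq_iff)
  then show ?thesis
    using A[OF \<open>rationalizes g A\<close>] by simp
qed

theorem proposition4p11:
  fixes \<Gamma> \<Delta> :: "fm multiset"
  assumes "seq_valid \<Gamma> \<Delta>"
  shows "derivable \<Gamma> \<Delta>"
proof -
  let ?f = "seq_form \<Gamma> \<Delta>"
  have int: "range ?f \<subseteq> \<int>"
    by (auto simp: seq_form_def)
  have "wderiv UNIV ?f"
    using form_valid_seq_form[OF assms] finite_supp_seq_form by (rule form_valid_wderiv)
  then have "wderiv \<rat> ?f"
    using int Ints_subset_Rats by (intro wderiv_rat_valued) auto
  then obtain N where "0 < N" "wderiv (frac_Ints N) ?f"
    using wderiv_rat_frac_Ints by blast
  then have "wderiv \<int> ((*) (real N) \<circ> ?f)"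
    by (intro wderiv_scale) (auto simp: frac_Ints_def)
  then have "derivable_form ((*) (real N) \<circ> ?f)"
    by (rule wderiv_Ints_derivable_form)
  then have "derivable (repeat_mset N \<Gamma>) (repeat_mset N \<Delta>)"
  proof (rule derivable_by_form[rotated 2])
    show "finite (supp ((*) (real N) \<circ> ?f))"
      using finite_supp_seq_form \<open>0 < N\<close> by (simp add: supp_scale)
    show "range ((*) (real N) \<circ> ?f) \<subseteq> \<int>"
      using int by (auto simp: seq_form_def)
  qed (simp add: seq_form_def algebra_simps)
  then show ?thesis
    by (rule derivable_repeat_cancel[OF \<open>0 < N\<close>])
qed

end
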